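(* Let $\gamma>1$, $0<\Lambda_0\le\Lambda_1$, $\kappa_\gamma>0$, $K\ge1$, $0<\lambda_1\le\dots\le\lambda_K$, and let $a$ be a positive definite $K\times K$ matrix with $\Lambda_0I\le a\le\Lambda_1I$ and $|a_{ij}|\le\kappa_\gamma/(1+|i-j|^\gamma)$ for all $i,j$. Then there is a constant $c_1$, depending only on $\gamma,\kappa_\gamma,\Lambda_0,\Lambda_1$ (not on $K$, the $\lambda_i$ or $t$), such that for all $t>0$ and all $i,j$, $$(2\Lambda_1)^{-1}L(i,i,t)1_{(i=j)}\le|A_{ij}(t)|\le L(i,j,t)\frac{c_1}{1+|i-j|^\gamma}.$$
   Context: $a(t)$ is the $K\times K$ matrix with entries $a_{ij}(t)=a_{ij}(1-e^{-(\lambda_i+\lambda_j)t})/(\lambda_i+\lambda_j)$, and $A(t)=a(t)^{-1}$. $L(i,j,t)=\big(\frac{1+\lambda_it}{t}\big)^{1/2}\big(\frac{1+\lambda_jt}{t}\big)^{1/2}$. $1_{(i=j)}$ is $1$ if $i=j$ and $0$ otherwise. *)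

theory Defs
  imports "Jordan_Normal_Form.Gauss_Jordan_Elimination"
begin

definition at_mat :: "nat \<Rightarrow> (nat \<Rightarrow> real) \<Rightarrow> real mat \<Rightarrow> real \<Rightarrow> real mat" where
  "at_mat K lam a t = mat K K (\<lambda>(i,j). a $$ (i,j) * (1 - exp (-(lam i + lam j) * t)) / (lam i + lam j))"

definition At_mat :: "nat \<Rightarrow> (nat \<Rightarrow> real) \<Rightarrow> real mat \<Rightarrow> real \<Rightarrow> real mat" where
  "At_mat K lam a t = the (mat_inverse (at_mat K lam a t))"

definition Lfun :: "(nat \<Rightarrow> real) \<Rightarrow> nat \<Rightarrow> nat \<Rightarrow> real \<Rightarrow> real" where
  "Lfun lam i j t = sqrt ((1 + lam i * t) / t) * sqrt ((1 + lam j * t) / t)"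

end

(*
  Rescale by D = diag (sqrt ((1 + lambda_i t) / t)). The entrywise factor
  (1 - exp (-(lambda_i + lambda_j) t)) / (lambda_i + lambda_j) of a(t) is the integral of
  exp (-lambda_i tau) exp (-lambda_j tau) over tau in [0, t], so the quadratic form of a(t) is an
  average of quadratic forms of a. Together with 1/2 <= D_ii^2 (1 - exp (-2 lambda_i t)) / (2 lambda_i) <= 2
  this makes b = D a(t) D uniformly well conditioned, Lambda0/2 <= b <= 2 Lambda1, and b inherits
  the polynomial off-diagonal decay of a. Jaffard's theorem then bounds the off-diagonal decay of
  b^-1 = D^-1 A(t) D^-1 uniformly in K, lambda and t. It is proved through the Neumann series of
  I - b/M: a squaring estimate, interpolating a weighted sup norm against the operator norm, shows
  that a fixed power of I - b/M is small in the weighted norm. The lower bound on the diagonal is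
  Cauchy-Schwarz: 1 <= (b^-1)_ii b_ii <= 2 Lambda1 (b^-1)_ii.
*)

theory Submission
  imports Defs "HOL-Analysis.Analysis" "Jordan_Normal_Form.Determinant"
begin

section \<open>Polynomial weights\<close>

definition poly_weight :: "real \<Rightarrow> nat \<Rightarrow> nat \<Rightarrow> real" where
  "poly_weight g i j = (1 + \<bar>real i - real j\<bar>) powr g"

lemma poly_weight_ge_one: "g \<ge> 0 \<Longrightarrow> poly_weight g i j \<ge> 1"
  unfolding poly_weight_def by (simp add: ge_one_powr_ge_zero)

lemma poly_weight_pos: "g \<ge> 0 \<Longrightarrow> poly_weight g i j > 0"
  using poly_weight_ge_one[of g i j] by linarith

lemma poly_weight_commute: "poly_weight g i j = poly_weight g j i"
  unfolding poly_weight_def by (simp add: abs_minus_commute)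

lemma poly_weight_same [simp]: "poly_weight g i i = 1"
  unfolding poly_weight_def by simp

lemma poly_weight_le_split:
  assumes "g \<ge> 0"
  shows "poly_weight g i j \<le> 2 powr g * (poly_weight g i k + poly_weight g k j)"
proof -
  let ?a = "1 + \<bar>real i - real k\<bar>" and ?b = "1 + \<bar>real k - real j\<bar>"
  have "1 + \<bar>real i - real j\<bar> \<le> 2 * max ?a ?b" by (simp add: abs_if max_def split: if_splits)
  then have "poly_weight g i j \<le> (2 * max ?a ?b) powr g"
    unfolding poly_weight_def using assms by (intro powr_mono2) auto
  also have "\<dots> = 2 powr g * max ?a ?b powr g" by (simp add: powr_mult)
  also have "max ?a ?b powr g \<le> poly_weight g i k + poly_weight g k j"
    unfolding poly_weight_def by (cases "?a \<le> ?b") (auto simp: max_def)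
  then have "2 powr g * max ?a ?b powr g \<le> 2 powr g * (poly_weight g i k + poly_weight g k j)"
    by (intro mult_left_mono) auto
  finally show ?thesis .
qed

lemma poly_weight_le_powr_dist:
  assumes "g \<ge> 0"
  shows "poly_weight g i j \<le> 2 powr g * (1 + \<bar>real i - real j\<bar> powr g)"
proof (cases "\<bar>real i - real j\<bar> \<le> 1")
  case True
  then have "poly_weight g i j \<le> 2 powr g"
    unfolding poly_weight_def using assms by (intro powr_mono2) auto
  then show ?thesis by (smt (verit) powr_ge_zero mult_le_cancel_left1)
next
  case False
  then have "poly_weight g i j \<le> (2 * \<bar>real i - real j\<bar>) powr g"
    unfolding poly_weight_def using assms by (intro powr_mono2) auto
  also have "\<dots> = 2 powr g * \<bar>real i - real j\<bar> powr g" by (simp add: powr_mult)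
  finally show ?thesis unfolding distrib_left using powr_ge_zero[of 2 g] by linarith
qed

lemma powr_dist_le_poly_weight:
  assumes "g \<ge> 0"
  shows "1 + \<bar>real i - real j\<bar> powr g \<le> 2 * poly_weight g i j"
proof -
  have "\<bar>real i - real j\<bar> powr g \<le> poly_weight g i j"
    unfolding poly_weight_def using assms by (intro powr_mono2) auto
  with poly_weight_ge_one[OF assms, of i j] show ?thesis by linarith
qed

lemma abs_le_of_weighted_le:
  assumes g: "g \<ge> 0" and le: "\<bar>x\<bar> * poly_weight g i j \<le> C"
  shows "\<bar>x\<bar> \<le> 2 * C / (1 + \<bar>real i - real j\<bar> powr g)"
proof -
  have w: "poly_weight g i j > 0" using poly_weight_pos[OF g] .
  have d: "1 + \<bar>real i - real j\<bar> powr g > 0" by (simp add: add_pos_nonneg)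
  have "0 \<le> \<bar>x\<bar> * poly_weight g i j" using w by simp
  with le have C: "C \<ge> 0" by linarith
  have "\<bar>x\<bar> * (1 + \<bar>real i - real j\<bar> powr g) \<le> \<bar>x\<bar> * (2 * poly_weight g i j)"
    using powr_dist_le_poly_weight[OF g] by (intro mult_left_mono) auto
  also have "\<dots> \<le> 2 * C" using le by simp
  finally show ?thesis using d by (simp add: le_divide_eq)
qed

lemma powr_tail_term_le:
  fixes d p :: real
  assumes d: "d \<ge> 1" and p: "p > 0"
  shows "(1 + d) powr (-(p+1)) \<le> (d powr (-p) - (d+1) powr (-p)) / p"
proof -
  have "ln (d/(d+1)) \<le> d/(d+1) - 1" using d by (intro ln_le_minus_one) auto
  moreover have "ln (d/(d+1)) = - ln ((d+1)/d)" using d by (simp add: ln_div)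
  moreover have "d/(d+1) - 1 = - 1/(d+1)" using d by (simp add: field_simps)
  ultimately have ln_ge: "ln ((d+1)/d) \<ge> 1/(d+1)" by simp
  have "1 + p/(d+1) \<le> 1 + p * ln ((d+1)/d)"
    using mult_left_mono[OF ln_ge, of p] p by simp
  also have "\<dots> \<le> exp (p * ln ((d+1)/d))" by (rule exp_ge_add_one_self)
  also have "exp (p * ln ((d+1)/d)) = ((d+1)/d) powr p"
    using d by (simp add: powr_def)
  finally have "(d+1) powr (-p) * (1 + p/(d+1)) \<le> (d+1) powr (-p) * ((d+1)/d) powr p"
    by (intro mult_left_mono) auto
  also have "(d+1) powr (-p) * ((d+1)/d) powr p = d powr (-p)"
    using d by (simp add: powr_divide powr_minus field_simps)
  finally have "p * ((d+1) powr (-p) / (d+1)) \<le> d powr (-p) - (d+1) powr (-p)"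
    using d by (simp add: field_simps)
  moreover have "(d+1) powr (-p) / (d+1) = (1 + d) powr (-(p+1))"
  proof -
    have "(1 + d) powr (-(p+1)) = (1+d) powr (-p + (-1))" by (simp add: algebra_simps)
    also have "\<dots> = (1+d) powr (-p) * (1+d) powr (-1)" by (rule powr_add)
    finally have "(1 + d) powr (-(p+1)) = (1+d) powr (-p) * (1+d) powr (-1)" .
    also have "(1+d) powr (-1) = 1/(1+d)" using d by (simp add: powr_neg_one)
    finally show ?thesis by (simp add: add.commute del: powr_neg_one')
  qed
  ultimately show ?thesis using p by (simp add: pos_le_divide_eq mult.commute)
qed

lemma powr_tail_sum_le:
  fixes p :: real
  assumes p: "p > 0"
  shows "(\<Sum>d\<in>{Suc N..<M}. (1 + real d) powr (-(p+1))) \<le> real (Suc N) powr (-p) / p"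
proof (cases "Suc N \<le> M")
  case True
  let ?f = "\<lambda>d. -(real d powr (-p)) / p"
  have "(\<Sum>d\<in>{Suc N..<M}. (1 + real d) powr (-(p+1))) \<le> (\<Sum>d\<in>{Suc N..<M}. ?f (Suc d) - ?f d)"
  proof (intro sum_mono)
    fix d assume "d \<in> {Suc N..<M}"
    then have "real d \<ge> 1" by simp
    from powr_tail_term_le[OF this p]
    show "(1 + real d) powr (-(p+1)) \<le> ?f (Suc d) - ?f d"
      by (simp add: diff_divide_distrib add.commute)
  qed
  also have "\<dots> = ?f M - ?f (Suc N)"
    by (rule sum_Suc_diff'[OF True])
  also have "\<dots> \<le> real (Suc N) powr (-p) / p"
    using p by (simp add: diff_divide_distrib)
  finally show ?thesis .
qed (use p in simp)

lemma reindexed_powr_tail_le: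
  fixes g :: real and h :: "nat \<Rightarrow> nat"
  assumes g: "g > 1" and "finite A" and inj: "inj_on h A" and range: "\<And>k. k \<in> A \<Longrightarrow> N < h k \<and> h k \<le> M"
  shows "(\<Sum>k\<in>A. (1 + real (h k)) powr (-g)) \<le> real (Suc N) powr (1-g) / (g-1)"
proof -
  have "(\<Sum>k\<in>A. (1 + real (h k)) powr (-g)) = (\<Sum>d\<in>h ` A. (1 + real d) powr (-g))"
    using sum.reindex[OF inj, of "\<lambda>d. (1 + real d) powr (-g)"] by simp
  also have "\<dots> \<le> (\<Sum>d\<in>{Suc N..<Suc M}. (1 + real d) powr (-g))"
    using range by (intro sum_mono2) fastforce+
  also have "\<dots> \<le> real (Suc N) powr (-(g-1)) / (g-1)"
    using powr_tail_sum_le[of "g-1" N "Suc M"] g by simp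
  finally show ?thesis by simp
qed

lemma inverse_weight_far_sum_le:
  fixes g :: real
  assumes g: "g > 1" and j: "j < K"
  shows "(\<Sum>k | k < K \<and> real N < \<bar>real k - real j\<bar>. 1 / poly_weight g k j)
           \<le> 2 * (real (Suc N) powr (1-g) / (g-1))"
proof -
  let ?F = "\<lambda>k. 1 / poly_weight g k j"
  let ?above = "{k. k < K \<and> j + N < k}" and ?below = "{k. k < K \<and> k + N < j}"
  have split: "{k. k < K \<and> real N < \<bar>real k - real j\<bar>} = ?above \<union> ?below" by auto
  have "(\<Sum>k\<in>?above. ?F k) = (\<Sum>k\<in>?above. (1 + real (k - j)) powr (-g))"
    by (intro sum.cong) (auto simp: poly_weight_def powr_minus_divide of_nat_diff)
  also have "\<dots> \<le> real (Suc N) powr (1-g) / (g-1)"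
    by (rule reindexed_powr_tail_le[OF g, where M = K]) (auto simp: inj_on_def)
  finally have above: "(\<Sum>k\<in>?above. ?F k) \<le> real (Suc N) powr (1-g) / (g-1)" .
  have "(\<Sum>k\<in>?below. ?F k) = (\<Sum>k\<in>?below. (1 + real (j - k)) powr (-g))"
    by (intro sum.cong) (auto simp: poly_weight_def powr_minus_divide of_nat_diff)
  also have "\<dots> \<le> real (Suc N) powr (1-g) / (g-1)"
    by (rule reindexed_powr_tail_le[OF g, where M = K]) (use j in \<open>auto simp: inj_on_def\<close>)
  finally have below: "(\<Sum>k\<in>?below. ?F k) \<le> real (Suc N) powr (1-g) / (g-1)" .
  have "(\<Sum>k | k < K \<and> real N < \<bar>real k - real j\<bar>. ?F k) = (\<Sum>k\<in>?above. ?F k) + (\<Sum>k\<in>?below. ?F k)"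
    unfolding split by (rule sum.union_disjoint) auto
  with above below show ?thesis by linarith
qed

lemma inverse_weight_sum_le:
  fixes g :: real
  assumes g: "g > 1" and j: "j < K"
  shows "(\<Sum>k<K. 1 / poly_weight g k j) \<le> 1 + 2 / (g-1)"
proof -
  have "{..<K} = insert j {k. k < K \<and> real 0 < \<bar>real k - real j\<bar>}" using j by auto
  then have "(\<Sum>k<K. 1 / poly_weight g k j)
      = 1 + (\<Sum>k | k < K \<and> real 0 < \<bar>real k - real j\<bar>. 1 / poly_weight g k j)"
    by simp
  with inverse_weight_far_sum_le[OF g j, of 0] show ?thesis by simp
qed

section \<open>Matrices as functions on an initial segment of indices\<close>

text \<open>A real \<open>K \<times> K\<close> matrix is modelled by a function \<open>nat \<Rightarrow> nat \<Rightarrow> real\<close> of which only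
  the entries with indices below \<open>K\<close> matter; hence identities between matrices are stated
  with \<open>meq K\<close>, equality on \<open>{..<K} \<times> {..<K}\<close>.\<close>

type_synonym rmat = "nat \<Rightarrow> nat \<Rightarrow> real"

definition mprod :: "nat \<Rightarrow> rmat \<Rightarrow> rmat \<Rightarrow> rmat" where
  "mprod K C D = (\<lambda>i j. \<Sum>k<K. C i k * D k j)"

definition mone :: rmat where
  "mone = (\<lambda>i j. if i = j then 1 else 0)"

fun mpow :: "nat \<Rightarrow> rmat \<Rightarrow> nat \<Rightarrow> rmat" where
  "mpow K C 0 = mone"
| "mpow K C (Suc n) = mprod K C (mpow K C n)"

definition mapply :: "nat \<Rightarrow> rmat \<Rightarrow> (nat \<Rightarrow> real) \<Rightarrow> nat \<Rightarrow> real" where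
  "mapply K C x = (\<lambda>i. \<Sum>j<K. C i j * x j)"

definition sqnorm :: "nat \<Rightarrow> (nat \<Rightarrow> real) \<Rightarrow> real" where
  "sqnorm K x = (\<Sum>i<K. (x i)\<^sup>2)"

definition bform :: "nat \<Rightarrow> rmat \<Rightarrow> (nat \<Rightarrow> real) \<Rightarrow> (nat \<Rightarrow> real) \<Rightarrow> real" where
  "bform K C y x = (\<Sum>i<K. y i * mapply K C x i)"

definition qform :: "nat \<Rightarrow> rmat \<Rightarrow> (nat \<Rightarrow> real) \<Rightarrow> real" where
  "qform K C x = bform K C x x"

definition msym :: "nat \<Rightarrow> rmat \<Rightarrow> bool" where
  "msym K C \<longleftrightarrow> (\<forall>i<K. \<forall>j<K. C i j = C j i)"

definition meq :: "nat \<Rightarrow> rmat \<Rightarrow> rmat \<Rightarrow> bool" where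
  "meq K A B \<longleftrightarrow> (\<forall>i<K. \<forall>j<K. A i j = B i j)"

definition op_norm_le :: "nat \<Rightarrow> rmat \<Rightarrow> real \<Rightarrow> bool" where
  "op_norm_le K C r \<longleftrightarrow> (\<forall>x. sqnorm K (mapply K C x) \<le> r\<^sup>2 * sqnorm K x)"

lemma meq_refl: "meq K A A"
  and meq_sym: "meq K A B \<Longrightarrow> meq K B A"
  and meq_trans: "meq K A B \<Longrightarrow> meq K B C \<Longrightarrow> meq K A C"
  unfolding meq_def by auto

lemma mone_commute: "mone i j = mone j i"
  unfolding mone_def by simp

lemma sum_mone_left:
  assumes "i < K"
  shows "(\<Sum>k<K. mone i k * f k) = f i"
proof -
  have "(\<Sum>k<K. mone i k * f k) = (\<Sum>k<K. if i = k then f k else 0)"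
    by (rule sum.cong) (auto simp: mone_def)
  then show ?thesis using assms by simp
qed

lemma sum_mone_right: "j < K \<Longrightarrow> (\<Sum>k<K. f k * mone k j) = f j"
  using sum_mone_left[of j K f] unfolding mone_commute[of _ j] by (simp add: mult.commute)

lemma sum_mone_col: "i < K \<Longrightarrow> (\<Sum>k<K. mone k i * f k) = f i"
  using sum_mone_left[of i K f] unfolding mone_commute[of i] .

lemma mone_same [simp]: "mone i i = 1"
  unfolding mone_def by simp

lemma mprod_assoc: "mprod K (mprod K A B) C = mprod K A (mprod K B C)"
  unfolding mprod_def
  by (auto simp: sum_distrib_left sum_distrib_right mult.assoc intro!: ext sum.swap[THEN trans])

lemma mprod_cong: "meq K A A' \<Longrightarrow> meq K B B' \<Longrightarrow> meq K (mprod K A B) (mprod K A' B')"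
  unfolding meq_def mprod_def by (auto intro!: sum.cong)

lemma mprod_mone_left: "meq K (mprod K mone C) C"
  unfolding meq_def mprod_def by (simp add: sum_mone_left)

lemma mprod_mone_right: "meq K (mprod K C mone) C"
  unfolding meq_def mprod_def by (simp add: sum_mone_right)

lemma mpow_add: "meq K (mpow K C (m + n)) (mprod K (mpow K C m) (mpow K C n))"
proof (induction m)
  case 0
  show ?case using meq_sym[OF mprod_mone_left] by simp
next
  case (Suc m)
  have "meq K (mpow K C (Suc m + n)) (mprod K C (mprod K (mpow K C m) (mpow K C n)))"
    using mprod_cong[OF meq_refl Suc.IH] by simp
  then show ?case by (simp add: mprod_assoc)
qed

lemma mpow_Suc_right: "meq K (mpow K C (Suc n)) (mprod K (mpow K C n) C)"
  using mpow_add[of K C n 1] mprod_cong[OF meq_refl mprod_mone_right, of K "mpow K C n" C]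
  by (auto intro: meq_trans)

lemma msym_mpow:
  assumes "msym K C"
  shows "msym K (mpow K C n)"
proof (induction n)
  case 0
  show ?case by (auto simp: msym_def mone_def)
next
  case (Suc n)
  have "mprod K C (mpow K C n) i j = mprod K C (mpow K C n) j i" if "i < K" "j < K" for i j
  proof -
    have "mprod K C (mpow K C n) i j = mprod K (mpow K C n) C j i"
      unfolding mprod_def using assms Suc.IH that unfolding msym_def
      by (auto intro!: sum.cong simp: mult.commute)
    also have "\<dots> = mprod K C (mpow K C n) j i"
      using mpow_Suc_right[of K C n] that unfolding meq_def by simp
    finally show ?thesis .
  qed
  then show ?case by (simp add: msym_def)
qed

lemma mapply_mprod: "mapply K (mprod K A B) x = mapply K A (mapply K B x)"
  unfolding mapply_def mprod_def
  by (auto intro!: ext simp: sum_distrib_left sum_distrib_right mult.assoc intro: sum.swap)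

lemma mapply_mone: "i < K \<Longrightarrow> mapply K mone x i = x i"
  unfolding mapply_def by (simp add: sum_mone_left)

lemma sqnorm_nonneg: "0 \<le> sqnorm K x"
  unfolding sqnorm_def by (intro sum_nonneg) auto

lemma sqnorm_unit: "i < K \<Longrightarrow> sqnorm K (\<lambda>k. mone k i) = 1"
  using sum_mone_col[of i K "\<lambda>k. mone k i"] unfolding sqnorm_def by (simp add: power2_eq_square)

lemma mapply_unit: "i < K \<Longrightarrow> mapply K C (\<lambda>k. mone k i) = (\<lambda>k. C k i)"
  unfolding mapply_def by (simp add: sum_mone_right)

lemma qform_unit: "i < K \<Longrightarrow> qform K C (\<lambda>k. mone k i) = C i i"
  unfolding qform_def bform_def by (simp add: mapply_unit sum_mone_col)

lemma qform_expand: "qform K C x = (\<Sum>i<K. \<Sum>j<K. C i j * x i * x j)"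
  unfolding qform_def bform_def mapply_def by (simp add: sum_distrib_left algebra_simps)

lemma qform_uminus: "qform K (\<lambda>i j. - C i j) x = - qform K C x"
  unfolding qform_expand by (simp add: sum_negf)

lemma op_norm_le_mprod:
  assumes "op_norm_le K A r" "op_norm_le K B s"
  shows "op_norm_le K (mprod K A B) (r * s)"
  unfolding op_norm_le_def
proof
  fix x
  have "sqnorm K (mapply K (mprod K A B) x) \<le> r\<^sup>2 * sqnorm K (mapply K B x)"
    using assms(1) unfolding op_norm_le_def mapply_mprod by blast
  also have "\<dots> \<le> r\<^sup>2 * (s\<^sup>2 * sqnorm K x)"
    using assms(2) unfolding op_norm_le_def by (intro mult_left_mono) auto
  finally show "sqnorm K (mapply K (mprod K A B) x) \<le> (r * s)\<^sup>2 * sqnorm K x"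
    by (simp add: power_mult_distrib)
qed

lemma op_norm_le_mpow:
  assumes "op_norm_le K C r"
  shows "op_norm_le K (mpow K C n) (r ^ n)"
proof (induction n)
  case 0
  show ?case unfolding op_norm_le_def sqnorm_def by (simp add: mapply_mone)
next
  case (Suc n)
  show ?case using op_norm_le_mprod[OF assms Suc] by simp
qed

lemma op_norm_le_col_sqsum:
  assumes "op_norm_le K C r" "j < K"
  shows "(\<Sum>k<K. (C k j)\<^sup>2) \<le> r\<^sup>2"
  using assms(1)[unfolded op_norm_le_def, rule_format, of "\<lambda>k. mone k j"]
  unfolding sqnorm_unit[OF assms(2)] mapply_unit[OF assms(2)] by (simp add: sqnorm_def)

lemma abs_entry_le_op_norm:
  assumes "op_norm_le K C r" "r \<ge> 0" "i < K" "j < K"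
  shows "\<bar>C i j\<bar> \<le> r"
proof -
  have "(C i j)\<^sup>2 \<le> (\<Sum>k<K. (C k j)\<^sup>2)"
    using assms(3) by (intro member_le_sum) auto
  also have "\<dots> \<le> r\<^sup>2" by (rule op_norm_le_col_sqsum[OF assms(1,4)])
  finally show ?thesis using assms(2) by (metis abs_le_square_iff abs_of_nonneg)
qed

lemma bform_commute:
  assumes "msym K C"
  shows "bform K C y x = bform K C x y"
proof -
  have "bform K C y x = (\<Sum>i<K. \<Sum>j<K. y i * C i j * x j)"
    unfolding bform_def mapply_def by (simp add: sum_distrib_left mult.assoc)
  also have "\<dots> = (\<Sum>j<K. \<Sum>i<K. x j * C j i * y i)"
    using assms unfolding msym_def by (subst sum.swap) (auto intro!: sum.cong)
  also have "\<dots> = bform K C x y"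
    unfolding bform_def mapply_def by (simp add: sum_distrib_left mult.assoc)
  finally show ?thesis .
qed

lemma qform_add_scaled:
  assumes "msym K C"
  shows "qform K C (\<lambda>i. x i + s * y i) = qform K C x + 2 * s * bform K C y x + s\<^sup>2 * qform K C y"
proof -
  have "qform K C (\<lambda>i. x i + s * y i)
      = qform K C x + s * bform K C x y + s * bform K C y x + s\<^sup>2 * qform K C y"
    unfolding qform_def bform_def mapply_def
    by (simp add: algebra_simps sum.distrib sum_distrib_left power2_eq_square)
  then show ?thesis using bform_commute[OF assms, of x y] by simp
qed

lemma bform_Cauchy_Schwarz:
  assumes S: "msym K C" and psd: "\<And>z. 0 \<le> qform K C z"
  shows "(bform K C y x)\<^sup>2 \<le> qform K C x * qform K C y"
proof -
  let ?a = "qform K C y" and ?b = "bform K C y x" and ?c = "qform K C x"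
  have H: "0 \<le> ?c + 2 * s * ?b + s\<^sup>2 * ?a" for s
    using psd[of "\<lambda>i. x i + s * y i"] qform_add_scaled[OF S, of x s y] by simp
  show ?thesis
  proof (cases "?a = 0")
    case True
    have "?b = 0"
    proof (rule ccontr)
      assume b: "?b \<noteq> 0"
      have "0 \<le> ?c + 2 * (-(?c+1)/(2*?b)) * ?b + (-(?c+1)/(2*?b))\<^sup>2 * ?a" by (rule H)
      also have "\<dots> = -1" using b True by (simp add: field_simps)
      finally show False by simp
    qed
    then show ?thesis using True by simp
  next
    case False
    then have a: "?a > 0" using psd[of y] by simp
    have "0 \<le> ?c + 2 * (-?b/?a) * ?b + (-?b/?a)\<^sup>2 * ?a" by (rule H)
    also have "\<dots> = ?c - ?b\<^sup>2 / ?a" using a by (simp add: field_simps power2_eq_square)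
    finally show ?thesis using a by (simp add: divide_le_eq mult.commute)
  qed
qed

lemma op_norm_le_of_qform:
  assumes S: "msym K C" and Q: "\<And>x. 0 \<le> qform K C x \<and> qform K C x \<le> r * sqnorm K x"
  shows "op_norm_le K C r"
  unfolding op_norm_le_def
proof
  fix x
  let ?y = "mapply K C x"
  have "(sqnorm K ?y)\<^sup>2 = (bform K C ?y x)\<^sup>2"
    by (simp add: sqnorm_def bform_def power2_eq_square)
  also have "\<dots> \<le> qform K C x * qform K C ?y" by (rule bform_Cauchy_Schwarz[OF S]) (use Q in blast)
  also have "\<dots> \<le> (r * sqnorm K x) * (r * sqnorm K ?y)"
    using Q[of x] Q[of ?y] by (intro mult_mono) auto
  finally have "sqnorm K ?y * sqnorm K ?y \<le> (r\<^sup>2 * sqnorm K x) * sqnorm K ?y"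
    by (simp add: power2_eq_square algebra_simps)
  then show "sqnorm K ?y \<le> r\<^sup>2 * sqnorm K x"
    using sqnorm_nonneg[of K ?y] sqnorm_nonneg[of K x]
    by (cases "sqnorm K ?y = 0") (auto simp: mult_le_cancel_right)
qed

lemma op_norm_le_inverse:
  assumes m: "m > 0" and coercive: "\<And>x. m * sqnorm K x \<le> qform K b x"
    and inv: "meq K (mprod K b X) mone"
  shows "op_norm_le K X (1 / m)"
  unfolding op_norm_le_def
proof
  fix z
  let ?y = "mapply K X z"
  have "mapply K b ?y i = z i" if "i < K" for i
  proof -
    have "mapply K b ?y i = (\<Sum>j<K. mprod K b X i j * z j)"
      unfolding mapply_mprod[symmetric] unfolding mapply_def ..
    also have "\<dots> = (\<Sum>j<K. mone i j * z j)"
      using inv that unfolding meq_def by (intro sum.cong) auto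
    finally show ?thesis using that by (simp add: sum_mone_left)
  qed
  then have "qform K b ?y = (\<Sum>i<K. ?y i * z i)"
    unfolding qform_def bform_def by simp
  then have "m * sqnorm K ?y \<le> (\<Sum>i<K. ?y i * z i)" using coercive[of ?y] by simp
  moreover have "0 \<le> m * sqnorm K ?y" using m sqnorm_nonneg[of K ?y] by simp
  ultimately have "(m * sqnorm K ?y)\<^sup>2 \<le> (\<Sum>i<K. ?y i * z i)\<^sup>2" by (intro power_mono)
  also have "\<dots> \<le> sqnorm K ?y * sqnorm K z"
    unfolding sqnorm_def by (rule Cauchy_Schwarz_ineq_sum)
  finally have "m\<^sup>2 * sqnorm K ?y * sqnorm K ?y \<le> sqnorm K z * sqnorm K ?y"
    by (simp add: power2_eq_square algebra_simps)
  then have "m\<^sup>2 * sqnorm K ?y \<le> sqnorm K z"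
    using sqnorm_nonneg[of K ?y] sqnorm_nonneg[of K z]
    by (cases "sqnorm K ?y = 0") (auto simp: mult_le_cancel_right)
  then show "sqnorm K ?y \<le> (1 / m)\<^sup>2 * sqnorm K z"
    using m by (simp add: field_simps power2_eq_square)
qed

lemma inverse_diag_mult_ge_one:
  assumes S: "msym K b" and psd: "\<And>z. 0 \<le> qform K b z"
    and inv: "meq K (mprod K b X) mone" and i: "i < K"
  shows "1 \<le> X i i * b i i"
proof -
  let ?y = "\<lambda>k. X k i" and ?e = "\<lambda>k. mone k i"
  have "bform K b ?e ?y = (\<Sum>k<K. mone k i * mprod K b X k i)"
    unfolding bform_def mapply_def mprod_def ..
  also have "\<dots> = mprod K b X i i" using i by (rule sum_mone_col)
  also have "\<dots> = 1" using inv i by (simp add: meq_def mone_def)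
  finally have "bform K b ?e ?y = 1" .
  moreover have "qform K b ?y = X i i"
  proof -
    have "qform K b ?y = (\<Sum>k<K. X k i * mprod K b X k i)"
      unfolding qform_def bform_def mapply_def mprod_def ..
    also have "\<dots> = (\<Sum>k<K. X k i * mone k i)"
      using inv i unfolding meq_def by (intro sum.cong) auto
    finally show ?thesis using i by (simp add: sum_mone_right)
  qed
  moreover have "(bform K b ?e ?y)\<^sup>2 \<le> qform K b ?y * qform K b ?e"
    by (rule bform_Cauchy_Schwarz[OF S psd])
  ultimately show ?thesis using qform_unit[OF i] by simp
qed

lemma inverse_diag_ge:
  assumes S: "msym K b" and m: "m > 0" and Q: "\<And>x. m * sqnorm K x \<le> qform K b x \<and> qform K b x \<le> M * sqnorm K x"
    and inv: "meq K (mprod K b X) mone" and i: "i < K"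
  shows "1 / M \<le> X i i"
proof -
  have b: "m \<le> b i i" "b i i \<le> M"
    using Q[of "\<lambda>k. mone k i"] by (simp_all add: qform_unit[OF i] sqnorm_unit[OF i])
  have "0 \<le> qform K b z" for z
    using Q[of z] mult_nonneg_nonneg[of m "sqnorm K z"] m sqnorm_nonneg[of K z] by linarith
  then have "1 \<le> X i i * b i i" by (rule inverse_diag_mult_ge_one[OF S _ inv i])
  then have "1 / b i i \<le> X i i" using b m by (simp add: divide_le_eq)
  moreover have "1 / M \<le> 1 / b i i" using b m by (intro divide_left_mono) auto
  ultimately show ?thesis by linarith
qed

section \<open>Jaffard's theorem\<close>

definition wnorm :: "real \<Rightarrow> nat \<Rightarrow> rmat \<Rightarrow> real" where
  "wnorm g K C = Max ((\<lambda>(i, j). \<bar>C i j\<bar> * poly_weight g i j) ` ({..<K} \<times> {..<K}))"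

lemma wnorm_ge: "i < K \<Longrightarrow> j < K \<Longrightarrow> \<bar>C i j\<bar> * poly_weight g i j \<le> wnorm g K C"
  unfolding wnorm_def by (rule Max_ge) auto

lemma wnorm_le:
  assumes "0 < K" "\<And>i j. i < K \<Longrightarrow> j < K \<Longrightarrow> \<bar>C i j\<bar> * poly_weight g i j \<le> B"
  shows "wnorm g K C \<le> B"
  unfolding wnorm_def using assms by (subst Max_le_iff) auto

lemma wnorm_nonneg: "0 < K \<Longrightarrow> g \<ge> 0 \<Longrightarrow> 0 \<le> wnorm g K C"
  using wnorm_ge[of 0 K 0 C g] by simp

lemma abs_entry_le_wnorm:
  "i < K \<Longrightarrow> j < K \<Longrightarrow> g \<ge> 0 \<Longrightarrow> \<bar>C i j\<bar> \<le> wnorm g K C / poly_weight g i j"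
  using wnorm_ge[of i K j C g] poly_weight_pos[of g i j] by (simp add: pos_le_divide_eq)

lemma wnorm_cong: "meq K A B \<Longrightarrow> wnorm g K A = wnorm g K B"
  unfolding wnorm_def meq_def by (intro arg_cong[where f = Max] image_cong) auto

lemma wnorm_mone_le: "0 < K \<Longrightarrow> wnorm g K mone \<le> 1"
  by (intro wnorm_le) (auto simp: mone_def)

lemma col_abs_sum_le_wnorm:
  assumes g: "g > 1" and j: "j < K"
  shows "(\<Sum>k<K. \<bar>D k j\<bar>) \<le> wnorm g K D * (1 + 2 / (g-1))"
proof -
  have "(\<Sum>k<K. \<bar>D k j\<bar>) \<le> (\<Sum>k<K. wnorm g K D * (1 / poly_weight g k j))"
    using abs_entry_le_wnorm[of _ K j g D] j g by (intro sum_mono) auto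
  also have "\<dots> = wnorm g K D * (\<Sum>k<K. 1 / poly_weight g k j)" by (simp add: sum_distrib_left)
  also have "\<dots> \<le> wnorm g K D * (1 + 2 / (g-1))"
    using inverse_weight_sum_le[OF g j] wnorm_nonneg[of K g D] j g by (intro mult_left_mono) auto
  finally show ?thesis .
qed

lemma row_abs_sum_le_wnorm:
  assumes g: "g > 1" and i: "i < K"
  shows "(\<Sum>k<K. \<bar>D i k\<bar>) \<le> wnorm g K D * (1 + 2 / (g-1))"
proof -
  have "(\<Sum>k<K. \<bar>D i k\<bar>) \<le> (\<Sum>k<K. wnorm g K D * (1 / poly_weight g k i))"
    using abs_entry_le_wnorm[of i K _ g D] i g by (intro sum_mono) (auto simp: poly_weight_commute)
  also have "\<dots> = wnorm g K D * (\<Sum>k<K. 1 / poly_weight g k i)" by (simp add: sum_distrib_left)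
  also have "\<dots> \<le> wnorm g K D * (1 + 2 / (g-1))"
    using inverse_weight_sum_le[OF g i] wnorm_nonneg[of K g D] i g by (intro mult_left_mono) auto
  finally show ?thesis .
qed

lemma mprod_weighted_entry_le:
  assumes g: "g > 1" and ij: "i < K" "j < K"
  shows "\<bar>mprod K C D i j\<bar> * poly_weight g i j
    \<le> 2 powr g * (wnorm g K C * (\<Sum>k<K. \<bar>D k j\<bar>) + wnorm g K D * (\<Sum>k<K. \<bar>C i k\<bar>))"
proof -
  have "\<bar>mprod K C D i j\<bar> * poly_weight g i j \<le> (\<Sum>k<K. \<bar>C i k\<bar> * \<bar>D k j\<bar>) * poly_weight g i j"
    unfolding mprod_def using poly_weight_ge_one[of g i j] g
    by (intro mult_right_mono) (auto intro: order.trans[OF sum_abs] simp: abs_mult)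
  also have "\<dots> \<le> (\<Sum>k<K. \<bar>C i k\<bar> * \<bar>D k j\<bar> * (2 powr g * (poly_weight g i k + poly_weight g k j)))"
    unfolding sum_distrib_right using poly_weight_le_split[of g i j] g
    by (intro sum_mono mult_left_mono) auto
  also have "\<dots> = 2 powr g * ((\<Sum>k<K. (\<bar>C i k\<bar> * poly_weight g i k) * \<bar>D k j\<bar>)
      + (\<Sum>k<K. (\<bar>D k j\<bar> * poly_weight g k j) * \<bar>C i k\<bar>))"
    by (simp add: sum_distrib_left sum.distrib[symmetric] algebra_simps)
  also have "\<dots> \<le> 2 powr g * ((\<Sum>k<K. wnorm g K C * \<bar>D k j\<bar>) + (\<Sum>k<K. wnorm g K D * \<bar>C i k\<bar>))"
    using wnorm_ge[of i K _ C g] wnorm_ge[of _ K j D g] ij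
    by (intro mult_left_mono add_mono sum_mono mult_right_mono) auto
  finally show ?thesis by (simp add: sum_distrib_left)
qed

definition wmult_const :: "real \<Rightarrow> real" where
  "wmult_const g = 2 * 2 powr g * (1 + 2 / (g-1))"

lemma wmult_const_ge_one:
  assumes "g > 1"
  shows "wmult_const g \<ge> 1"
proof -
  have "1 * 1 \<le> 2 powr g * (1 + 2 / (g-1))"
    using assms by (intro mult_mono) (auto simp: ge_one_powr_ge_zero)
  then show ?thesis unfolding wmult_const_def by simp
qed

lemma wnorm_mprod_le:
  assumes g: "g > 1" and K: "0 < K"
  shows "wnorm g K (mprod K C D) \<le> wmult_const g * wnorm g K C * wnorm g K D"
proof (rule wnorm_le[OF K])
  fix i j assume ij: "i < K" "j < K"
  let ?S = "1 + 2 / (g-1)"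
  have "wnorm g K C * (\<Sum>k<K. \<bar>D k j\<bar>) + wnorm g K D * (\<Sum>k<K. \<bar>C i k\<bar>)
      \<le> wnorm g K C * (wnorm g K D * ?S) + wnorm g K D * (wnorm g K C * ?S)"
    using col_abs_sum_le_wnorm[OF g ij(2), of D] row_abs_sum_le_wnorm[OF g ij(1), of C]
      wnorm_nonneg[OF K, of g C] wnorm_nonneg[OF K, of g D] g
    by (intro add_mono mult_left_mono) auto
  then have "2 powr g * (wnorm g K C * (\<Sum>k<K. \<bar>D k j\<bar>) + wnorm g K D * (\<Sum>k<K. \<bar>C i k\<bar>))
      \<le> 2 powr g * (wnorm g K C * (wnorm g K D * ?S) + wnorm g K D * (wnorm g K C * ?S))"
    by (intro mult_left_mono) auto
  also have "\<dots> = wmult_const g * wnorm g K C * wnorm g K D"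
    unfolding wmult_const_def by (simp add: algebra_simps)
  finally show "\<bar>mprod K C D i j\<bar> * poly_weight g i j \<le> wmult_const g * wnorm g K C * wnorm g K D"
    using mprod_weighted_entry_le[OF g ij, of C D] by linarith
qed

lemma wnorm_mpow_le:
  assumes g: "g > 1" and K: "0 < K" and "wnorm g K A \<le> G" "G \<ge> 1"
  shows "wnorm g K (mpow K A n) \<le> (wmult_const g * G) ^ n"
proof (induction n)
  case 0
  show ?case using wnorm_mone_le[OF K] by simp
next
  case (Suc n)
  have "wnorm g K (mpow K A (Suc n)) \<le> wmult_const g * wnorm g K A * wnorm g K (mpow K A n)"
    using wnorm_mprod_le[OF g K] by simp
  also have "\<dots> \<le> wmult_const g * G * (wmult_const g * G) ^ n"
    using Suc.IH assms wmult_const_ge_one[OF g] wnorm_nonneg[OF K, of g A]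
      wnorm_nonneg[OF K, of g "mpow K A n"]
    by (intro mult_mono) auto
  finally show ?case by simp
qed

lemma wnorm_mpow_add_le:
  assumes g: "g > 1" and K: "0 < K"
  shows "wnorm g K (mpow K A (m + n)) \<le> wmult_const g * wnorm g K (mpow K A m) * wnorm g K (mpow K A n)"
  using wnorm_cong[OF mpow_add[of K A m n]] wnorm_mprod_le[OF g K] by simp

lemma card_near_le: "card {k. k < K \<and> \<bar>real k - real j\<bar> \<le> real N} \<le> 2 * N + 1"
proof -
  have "card {k. k < K \<and> \<bar>real k - real j\<bar> \<le> real N} \<le> card {j - N..j + N}"
    by (intro card_mono) auto
  then show ?thesis by simp
qed

lemma col_abs_sum_le_split:
  assumes g: "g > 1" and C: "op_norm_le K C q" "q \<ge> 0" and j: "j < K"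
  shows "(\<Sum>k<K. \<bar>C k j\<bar>)
    \<le> sqrt (real (2 * N + 1)) * q + wnorm g K C * (2 * (real (Suc N) powr (1-g) / (g-1)))"
proof -
  let ?near = "{k. k < K \<and> \<bar>real k - real j\<bar> \<le> real N}"
  let ?far = "{k. k < K \<and> real N < \<bar>real k - real j\<bar>}"
  have "(\<Sum>k\<in>?near. \<bar>C k j\<bar>)\<^sup>2 \<le> (\<Sum>k\<in>?near. \<bar>C k j\<bar>\<^sup>2) * real (card ?near)"
    using Cauchy_Schwarz_ineq_sum[of "\<lambda>k. \<bar>C k j\<bar>" "\<lambda>_. 1" ?near] by simp
  also have "\<dots> \<le> q\<^sup>2 * real (2 * N + 1)"
  proof (rule mult_mono)
    have "(\<Sum>k\<in>?near. (C k j)\<^sup>2) \<le> (\<Sum>k<K. (C k j)\<^sup>2)" by (rule sum_mono2) auto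
    then show "(\<Sum>k\<in>?near. \<bar>C k j\<bar>\<^sup>2) \<le> q\<^sup>2" using op_norm_le_col_sqsum[OF C(1) j] by simp
    show "real (card ?near) \<le> real (2 * N + 1)" using card_near_le[of K j N] by linarith
  qed auto
  finally have "(\<Sum>k\<in>?near. \<bar>C k j\<bar>) \<le> sqrt (q\<^sup>2 * real (2 * N + 1))"
    by (rule real_le_rsqrt)
  then have near: "(\<Sum>k\<in>?near. \<bar>C k j\<bar>) \<le> sqrt (real (2 * N + 1)) * q"
    using C(2) by (simp add: real_sqrt_mult mult.commute)
  have "(\<Sum>k\<in>?far. \<bar>C k j\<bar>) \<le> (\<Sum>k\<in>?far. wnorm g K C * (1 / poly_weight g k j))"
    using abs_entry_le_wnorm[of _ K j g C] j g by (intro sum_mono) auto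
  also have "\<dots> \<le> wnorm g K C * (2 * (real (Suc N) powr (1-g) / (g-1)))"
    unfolding sum_distrib_left[symmetric]
    using inverse_weight_far_sum_le[OF g j, of N] wnorm_nonneg[of K g C] j g
    by (intro mult_left_mono) auto
  finally have far: "(\<Sum>k\<in>?far. \<bar>C k j\<bar>) \<le> wnorm g K C * (2 * (real (Suc N) powr (1-g) / (g-1)))" .
  have split: "{..<K} = ?near \<union> ?far" by auto
  have "(\<Sum>k<K. \<bar>C k j\<bar>) = (\<Sum>k\<in>?near. \<bar>C k j\<bar>) + (\<Sum>k\<in>?far. \<bar>C k j\<bar>)"
    unfolding split by (rule sum.union_disjoint) auto
  with near far show ?thesis by linarith
qed

text \<open>The cut-off \<open>N \<approx> (G/q)^(2u)\<close> balances the near-diagonal part of a column sum,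
  controlled by the operator norm \<open>q\<close>, against the far part, controlled by the weighted
  norm \<open>G\<close>.\<close>

lemma exists_balanced_cutoff:
  fixes e q G :: real
  assumes e: "e > 0" and q: "0 < q" "q \<le> G"
  defines "u \<equiv> 1 / (1 + 2 * e)"
  shows "\<exists>N::nat. sqrt (real (2 * N + 1)) * q + G * (2 * (real (Suc N) powr (-e) / e))
    \<le> (2 + 2 / e) * (G powr u * q powr (1-u))"
proof -
  have G: "G > 0" using q by simp
  have u: "0 < u" "2 * u * e = 1 - u" using e unfolding u_def by (auto simp: field_simps)
  define X where "X = (G / q) powr (2 * u)"
  have X1: "X \<ge> 1" unfolding X_def using q u by (simp add: ge_one_powr_ge_zero)
  define N where "N = nat \<lceil>X\<rceil> - 1"
  have SucN: "real (Suc N) = of_int \<lceil>X\<rceil>" unfolding N_def using X1 by simp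
  have XN: "X \<le> real (Suc N)" "real (Suc N) \<le> 2 * X"
    unfolding SucN using X1 of_int_ceiling_le_add_one[of X] by linarith+
  define Z where "Z = G powr u * q powr (1-u)"
  have "sqrt (real (2 * N + 1)) \<le> sqrt (4 * X)" using XN by (intro real_sqrt_le_mono) auto
  also have "sqrt (4 * X) = 2 * (G / q) powr u"
  proof -
    have "4 * X = (2 * (G / q) powr u)\<^sup>2"
      unfolding X_def by (simp add: power2_eq_square powr_add[symmetric])
    then have "sqrt (4 * X) = \<bar>2 * (G / q) powr u\<bar>" by (simp only: real_sqrt_abs)
    then show ?thesis by simp
  qed
  finally have "sqrt (real (2 * N + 1)) * q \<le> 2 * (G / q) powr u * q"
    using q by (intro mult_right_mono) auto
  also have "\<dots> = 2 * Z"
    unfolding Z_def using q G by (simp add: powr_divide powr_diff divide_simps)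
  finally have near: "sqrt (real (2 * N + 1)) * q \<le> 2 * Z" .
  have "real (Suc N) powr (-e) \<le> X powr (-e)"
    using XN X1 e by (intro powr_mono2') auto
  also have "X powr (-e) = (G / q) powr (u - 1)"
  proof -
    have "2 * u * (-e) = u - 1" using u(2) by linarith
    then show ?thesis unfolding X_def powr_powr by simp
  qed
  finally have "G * (2 * (real (Suc N) powr (-e) / e)) \<le> 2 * (G * (G / q) powr (u - 1)) / e"
    using G e by (simp add: divide_right_mono mult_left_mono)
  also have "G * (G / q) powr (u - 1) = Z"
    unfolding Z_def using q G by (simp add: powr_divide powr_diff powr_minus divide_simps)
  finally have far: "G * (2 * (real (Suc N) powr (-e) / e)) \<le> 2 * Z / e" .
  have "(2 + 2 / e) * Z = 2 * Z + 2 * Z / e" by (simp add: algebra_simps)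
  with near far show ?thesis unfolding Z_def by (intro exI[of _ N]) linarith
qed

definition jaffard_exp :: "real \<Rightarrow> real" where
  "jaffard_exp g = 1 / (1 + 2 * (g - 1))"

definition jaffard_const :: "real \<Rightarrow> real" where
  "jaffard_const g = 2 * 2 powr g * (2 + 2 / (g - 1))"

lemma jaffard_exp_bounds: "g > 1 \<Longrightarrow> 0 < jaffard_exp g \<and> jaffard_exp g < 1"
  unfolding jaffard_exp_def by (auto simp: field_simps)

lemma jaffard_const_ge_one:
  assumes "g > 1"
  shows "jaffard_const g \<ge> 1"
proof -
  have "1 * 2 \<le> 2 powr g * (2 + 2 / (g - 1))"
    using assms by (intro mult_mono) (auto simp: ge_one_powr_ge_zero)
  then show ?thesis unfolding jaffard_const_def by simp
qed

lemma jaffard_const_root_ge_one: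
  assumes "g > 1"
  shows "jaffard_const g powr (1 / jaffard_exp g) \<ge> 1"
  using jaffard_const_ge_one[OF assms] jaffard_exp_bounds[OF assms] by (simp add: ge_one_powr_ge_zero)

lemma wnorm_square_le:
  assumes g: "g > 1" and K: "0 < K" and C: "msym K C" "op_norm_le K C q"
    and q: "0 < q" "q \<le> G" and CG: "wnorm g K C \<le> G"
  shows "wnorm g K (mprod K C C)
    \<le> jaffard_const g * (G powr (1 + jaffard_exp g) * q powr (1 - jaffard_exp g))"
proof -
  let ?u = "jaffard_exp g"
  define s where "s = (2 + 2 / (g-1)) * (G powr ?u * q powr (1 - ?u))"
  obtain N :: nat where N: "sqrt (real (2 * N + 1)) * q + G * (2 * (real (Suc N) powr (-(g-1)) / (g-1))) \<le> s"
    using exists_balanced_cutoff[of "g-1" q G] g q unfolding s_def jaffard_exp_def by auto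
  have col: "(\<Sum>k<K. \<bar>C k j\<bar>) \<le> s" if j: "j < K" for j
  proof -
    have "(\<Sum>k<K. \<bar>C k j\<bar>)
        \<le> sqrt (real (2 * N + 1)) * q + wnorm g K C * (2 * (real (Suc N) powr (1-g) / (g-1)))"
      using col_abs_sum_le_split[OF g C(2) _ j] q by simp
    also have "\<dots> \<le> sqrt (real (2 * N + 1)) * q + G * (2 * (real (Suc N) powr (1-g) / (g-1)))"
      using CG g by (intro add_left_mono mult_right_mono) auto
    finally show ?thesis using N by simp
  qed
  have row: "(\<Sum>k<K. \<bar>C i k\<bar>) \<le> s" if i: "i < K" for i
    using col[OF i] C(1) i unfolding msym_def by (metis (no_types, lifting) lessThan_iff sum.cong)
  have G: "G > 0" using q by simp
  show ?thesis
  proof (rule wnorm_le[OF K])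
    fix i j assume ij: "i < K" "j < K"
    have "\<bar>mprod K C C i j\<bar> * poly_weight g i j
        \<le> 2 powr g * (wnorm g K C * (\<Sum>k<K. \<bar>C k j\<bar>) + wnorm g K C * (\<Sum>k<K. \<bar>C i k\<bar>))"
      by (rule mprod_weighted_entry_le[OF g ij])
    also have "\<dots> \<le> 2 powr g * (G * s + G * s)"
      using col[OF ij(2)] row[OF ij(1)] CG wnorm_nonneg[OF K, of g C] g G
      by (intro mult_left_mono add_mono mult_mono) (auto intro: sum_nonneg)
    also have "\<dots> = jaffard_const g * (G * G powr ?u * q powr (1 - ?u))"
      unfolding jaffard_const_def s_def by (simp add: algebra_simps)
    also have "G * G powr ?u = G powr (1 + ?u)" using G by (simp add: powr_add)
    finally show "\<bar>mprod K C C i j\<bar> * poly_weight g i j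
        \<le> jaffard_const g * (G powr (1 + ?u) * q powr (1 - ?u))"
      by (simp add: mult.assoc)
  qed
qed

text \<open>After normalising by \<open>c\<close> the squaring estimate is a pure recursion. Along the powers
  \<open>P = A ^ 2 ^ k\<close> the operator norm \<open>\<rho> = r ^ 2 ^ k\<close> squares while the exponent \<open>1 + u\<close>
  stays below \<open>2\<close>, so the recursion drives the weighted norm of \<open>A ^ 2 ^ k\<close> to \<open>0\<close>.\<close>

lemma squaring_step:
  assumes g: "g > 1" and K: "0 < K" and P: "msym K P" "op_norm_le K P \<rho>" and \<rho>: "0 < \<rho>"
  defines "u \<equiv> jaffard_exp g"
  defines "c \<equiv> jaffard_const g powr (1 / u)"
  shows "c * max (wnorm g K (mprod K P P)) (\<rho>\<^sup>2)
    \<le> (c * max (wnorm g K P) \<rho>) powr (1 + u) * \<rho> powr (1 - u)"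
proof -
  define E where "E = max (wnorm g K P) \<rho>"
  have E: "\<rho> \<le> E" "wnorm g K P \<le> E" "E > 0" unfolding E_def using \<rho> by auto
  have u: "0 < u" "u < 1" unfolding u_def using jaffard_exp_bounds[OF g] by auto
  have c1: "c \<ge> 1" unfolding c_def u_def by (rule jaffard_const_root_ge_one[OF g])
  have cu: "c * jaffard_const g = c powr (1 + u)"
    unfolding c_def using jaffard_const_ge_one[OF g] u by (simp add: powr_add powr_powr)
  have rhs: "(c * E) powr (1 + u) * \<rho> powr (1 - u) = c powr (1 + u) * (E powr (1 + u) * \<rho> powr (1 - u))"
    using c1 E by (simp add: powr_mult)
  have "c * wnorm g K (mprod K P P) \<le> c * (jaffard_const g * (E powr (1 + u) * \<rho> powr (1 - u)))"
    using wnorm_square_le[OF g K P \<rho> E(1,2)] c1 unfolding u_def by (intro mult_left_mono) auto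
  also have "\<dots> = (c * E) powr (1 + u) * \<rho> powr (1 - u)"
    unfolding rhs cu[symmetric] by (simp add: mult.assoc)
  finally have square: "c * wnorm g K (mprod K P P) \<le> (c * E) powr (1 + u) * \<rho> powr (1 - u)" .
  have "c * \<rho>\<^sup>2 = c * (\<rho> powr (1 + u) * \<rho> powr (1 - u))"
    using \<rho> by (simp add: powr_add[symmetric] powr_realpow)
  also have "\<dots> \<le> c powr (1 + u) * (E powr (1 + u) * \<rho> powr (1 - u))"
    using c1 E \<rho> u by (intro mult_mono powr_mono2 mult_right_mono) (auto simp: powr_ge_zero
        intro: order.trans[OF _ powr_mono[of 1 "1 + u" c]])
  finally have rho_square: "c * \<rho>\<^sup>2 \<le> (c * E) powr (1 + u) * \<rho> powr (1 - u)" unfolding rhs .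
  from square rho_square show ?thesis unfolding E_def by (simp add: max_def)
qed

lemma log_recursion_bound:
  fixes h :: "nat \<Rightarrow> real"
  assumes rec: "\<And>k. h (Suc k) \<le> (1 + u) * h k - (1 - u) * (2 ^ k * l)"
    and u: "0 < u" "u < 1" and l: "l > 0"
  shows "h k \<le> (1 + u) ^ k * (h 0 + l / 2) - 2 ^ k * l / 2"
proof (induction k)
  case 0
  show ?case by simp
next
  case (Suc k)
  have "h (Suc k) \<le> (1 + u) * ((1 + u) ^ k * (h 0 + l / 2) - 2 ^ k * l / 2) - (1 - u) * (2 ^ k * l)"
    using rec[of k] Suc.IH u by (smt (verit) mult_left_mono)
  also have "\<dots> = (1 + u) ^ Suc k * (h 0 + l / 2) - 2 ^ k * l * ((3 - u) / 2)"
    by (simp add: field_simps)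
  also have "\<dots> \<le> (1 + u) ^ Suc k * (h 0 + l / 2) - 2 ^ Suc k * l / 2"
    using u l by simp
  finally show ?case .
qed

lemma exists_power_gap_below:
  fixes u l \<phi> d :: real
  assumes u: "0 < u" "u < 1" and l: "l > 0"
  shows "\<exists>k. (1 + u) ^ k * \<phi> - 2 ^ k * l / 2 \<le> d"
proof -
  have q: "2 / (1 + u) > 1" using u by simp
  obtain k1 where k1: "2 * (\<phi> + 1) / l < (2 / (1 + u)) ^ k1" using real_arch_pow[OF q] by blast
  obtain k2 where k2: "\<bar>d\<bar> < (1 + u) ^ k2" using real_arch_pow[of "1 + u"] u by auto
  let ?k = "k1 + k2" and ?a = "(2 / (1 + u)) ^ (k1 + k2)"
  define x where "x = ?a * l / 2"
  from k1 l have "2 * (\<phi> + 1) < (2 / (1 + u)) ^ k1 * l" by (simp add: divide_less_eq)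
  also have "\<dots> \<le> ?a * l"
    using q l by (intro mult_right_mono power_increasing) auto
  finally have "2 * (\<phi> + 1) < 2 * x" unfolding x_def by simp
  then have gap: "\<phi> - x \<le> -1" by simp
  have "(1 + u) * (2 / (1 + u)) = 2" using u by (simp add: field_simps)
  then have "(1 + u) ^ ?k * ?a = 2 ^ ?k" by (metis power_mult_distrib)
  then have "(1 + u) ^ ?k * \<phi> - 2 ^ ?k * l / 2 = (1 + u) ^ ?k * (\<phi> - x)"
    unfolding x_def by (simp add: algebra_simps)
  also have "\<dots> \<le> (1 + u) ^ ?k * (-1)"
    using gap u by (intro mult_left_mono) auto
  also have "\<dots> \<le> d"
    using k2 power_increasing[of k2 ?k "1 + u"] u by linarith
  finally show ?thesis by blast
qed

lemma ln_wnorm_mpow_recursion: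
  assumes g: "g > 1" and K: "0 < K" and A: "msym K A" "op_norm_le K A r" and r: "0 < r"
  defines "u \<equiv> jaffard_exp g"
  defines "c \<equiv> jaffard_const g powr (1 / u)"
  shows "ln (c * max (wnorm g K (mpow K A (2 ^ Suc k))) (r ^ 2 ^ Suc k))
    \<le> (1 + u) * ln (c * max (wnorm g K (mpow K A (2 ^ k))) (r ^ 2 ^ k)) - (1 - u) * (2 ^ k * - ln r)"
proof -
  define P where "P = mpow K A (2 ^ k)"
  define \<rho> where "\<rho> = r ^ 2 ^ k"
  define E where "E = c * max (wnorm g K P) \<rho>"
  have \<rho>: "\<rho> > 0" unfolding \<rho>_def using r by simp
  have c1: "c \<ge> 1" unfolding c_def u_def using jaffard_const_root_ge_one[OF g] .
  have E: "E > 0" unfolding E_def using c1 \<rho> by (simp add: less_max_iff_disj)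
  have "wnorm g K (mpow K A (2 ^ Suc k)) = wnorm g K (mprod K P P)"
    unfolding P_def using wnorm_cong[OF mpow_add[of K A "2 ^ k" "2 ^ k"]] by (simp add: mult_2)
  moreover have "r ^ 2 ^ Suc k = \<rho>\<^sup>2" unfolding \<rho>_def by (simp add: power_mult[symmetric] mult.commute)
  moreover have "op_norm_le K P \<rho>"
    unfolding P_def \<rho>_def using op_norm_le_mpow[OF A(2)] by (simp add: power_mult)
  ultimately have "c * max (wnorm g K (mpow K A (2 ^ Suc k))) (r ^ 2 ^ Suc k) \<le> E powr (1 + u) * \<rho> powr (1 - u)"
    using squaring_step[OF g K msym_mpow[OF A(1)] _ \<rho>] unfolding E_def P_def c_def u_def by simp
  moreover have "0 < c * max (wnorm g K (mpow K A (2 ^ Suc k))) (r ^ 2 ^ Suc k)"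
    using c1 r by (simp add: less_max_iff_disj)
  ultimately have "ln (c * max (wnorm g K (mpow K A (2 ^ Suc k))) (r ^ 2 ^ Suc k))
      \<le> ln (E powr (1 + u) * \<rho> powr (1 - u))" by simp
  also have "\<dots> = (1 + u) * ln E + (1 - u) * (2 ^ k * ln r)"
    using E \<rho> r unfolding \<rho>_def by (simp add: ln_mult ln_powr ln_realpow)
  finally show ?thesis unfolding E_def P_def \<rho>_def by simp
qed

lemma exists_wnorm_mpow_le:
  assumes g: "g > 1" and r: "0 < r" "r < 1" and d: "d > 0"
  shows "\<exists>p>0. \<forall>K A. 0 < K \<longrightarrow> msym K A \<longrightarrow> op_norm_le K A r \<longrightarrow> wnorm g K A \<le> G
    \<longrightarrow> wnorm g K (mpow K A p) \<le> d"
proof -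
  define u where "u = jaffard_exp g"
  define c where "c = jaffard_const g powr (1 / u)"
  define l where "l = - ln r"
  have u: "0 < u" "u < 1" unfolding u_def using jaffard_exp_bounds[OF g] by auto
  have c1: "c \<ge> 1" unfolding c_def u_def using jaffard_const_root_ge_one[OF g] .
  have l: "l > 0" unfolding l_def using r by simp
  obtain k where k: "(1 + u) ^ k * (ln (c * max G 1) + l / 2) - 2 ^ k * l / 2 \<le> ln d"
    using exists_power_gap_below[OF u l] by blast
  show ?thesis
  proof (intro exI[of _ "2 ^ k"] conjI allI impI)
    fix K A assume K: "0 < K" and A: "msym K A" "op_norm_le K A r" "wnorm g K A \<le> G"
    define h where "h j = ln (c * max (wnorm g K (mpow K A (2 ^ j))) (r ^ 2 ^ j))" for j
    have "h k \<le> (1 + u) ^ k * (h 0 + l / 2) - 2 ^ k * l / 2"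
      using log_recursion_bound[OF _ u l, of h] ln_wnorm_mpow_recursion[OF g K A(1,2) r(1)]
      unfolding h_def l_def c_def u_def by blast
    also have "h 0 \<le> ln (c * max G 1)"
    proof -
      have "wnorm g K (mpow K A 1) = wnorm g K A"
        using wnorm_cong[OF mprod_mone_right[of K A]] by simp
      then have "max (wnorm g K (mpow K A (2 ^ 0))) (r ^ 2 ^ 0) \<le> max G 1" using A(3) r by auto
      then show ?thesis unfolding h_def using c1 r by (simp add: less_max_iff_disj)
    qed
    then have "(1 + u) ^ k * (h 0 + l / 2) - 2 ^ k * l / 2
        \<le> (1 + u) ^ k * (ln (c * max G 1) + l / 2) - 2 ^ k * l / 2"
      using u by simp
    finally have "h k \<le> ln d" using k by linarith
    moreover have "0 < c * max (wnorm g K (mpow K A (2 ^ k))) (r ^ 2 ^ k)"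
      using c1 r by (simp add: less_max_iff_disj)
    ultimately have "c * max (wnorm g K (mpow K A (2 ^ k))) (r ^ 2 ^ k) \<le> d"
      unfolding h_def using d by simp
    moreover have "wnorm g K (mpow K A (2 ^ k)) \<le> c * max (wnorm g K (mpow K A (2 ^ k))) (r ^ 2 ^ k)"
      using c1 r by (smt (verit) max.cobounded1 mult_le_cancel_right1 zero_less_power)
    ultimately show "wnorm g K (mpow K A (2 ^ k)) \<le> d" by linarith
  qed simp
qed

lemma wnorm_mpow_geometric:
  assumes g: "g > 1" and K: "0 < K" and A: "wnorm g K A \<le> G" "G \<ge> 1"
    and p: "p > 0" "wnorm g K (mpow K A p) \<le> 1 / (2 * wmult_const g)"
  shows "wnorm g K (mpow K A n) \<le> (wmult_const g * G) ^ p * (1/2) ^ (n div p)"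
proof -
  let ?c = "wmult_const g"
  have c1: "?c \<ge> 1" using wmult_const_ge_one[OF g] .
  have pow: "wnorm g K (mpow K A s) \<le> (?c * G) ^ s" for s
    using wnorm_mpow_le[OF g K A] .
  have blocks: "wnorm g K (mpow K A (q * p)) \<le> (1/2) ^ q / ?c" if "q \<ge> 1" for q
    using that
  proof (induction q rule: dec_induct)
    case base
    then show ?case using p(2) by simp
  next
    case (step q)
    have "wnorm g K (mpow K A (Suc q * p)) \<le> ?c * wnorm g K (mpow K A (q * p)) * wnorm g K (mpow K A p)"
      using wnorm_mpow_add_le[OF g K, of A "q * p" p] by (simp add: add.commute)
    also have "\<dots> \<le> ?c * ((1/2) ^ q / ?c) * (1 / (2 * ?c))"
      using step.IH p(2) c1 wnorm_nonneg[OF K, of g] g by (intro mult_mono) auto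
    also have "\<dots> = (1/2) ^ Suc q / ?c" using c1 by (simp add: field_simps)
    finally show ?case .
  qed
  have "1 \<le> ?c * G" using mult_mono[OF c1 A(2)] c1 by simp
  then have base: "(?c * G) ^ (n mod p) \<le> (?c * G) ^ p"
    using p(1) by (intro power_increasing) (auto intro: less_imp_le)
  show ?thesis
  proof (cases "n div p = 0")
    case True
    then have "n mod p = n" using p(1) by (simp add: div_eq_0_iff)
    then show ?thesis using True pow[of n] base by simp
  next
    case False
    have "wnorm g K (mpow K A n) \<le> ?c * wnorm g K (mpow K A (n div p * p)) * wnorm g K (mpow K A (n mod p))"
      using wnorm_mpow_add_le[OF g K, of A "n div p * p" "n mod p"] by simp
    also have "\<dots> \<le> ?c * ((1/2) ^ (n div p) / ?c) * (?c * G) ^ p"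
      using blocks[of "n div p"] False pow[of "n mod p"] base c1 wnorm_nonneg[OF K, of g] g
      by (intro mult_mono) auto
    also have "\<dots> = (?c * G) ^ p * (1/2) ^ (n div p)" using c1 by simp
    finally show ?thesis .
  qed
qed

lemma sum_half_pow_div_le:
  assumes p: "p > 0"
  shows "(\<Sum>n<N. (1/2::real) ^ (n div p)) \<le> 2 * real p"
proof -
  have "(\<Sum>n<N. (1/2::real) ^ (n div p)) \<le> (\<Sum>n<N * p. (1/2::real) ^ (n div p))"
    using p by (intro sum_mono2) auto
  also have "\<dots> = (\<Sum>m<N. \<Sum>n\<in>{m * p..<m * p + p}. (1/2::real) ^ (n div p))"
    by (rule sum.nat_group[symmetric])
  also have "\<dots> = (\<Sum>m<N. real p * (1/2) ^ m)"
  proof (intro sum.cong refl)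
    fix m
    have "n div p = m" if "n \<in> {m * p..<m * p + p}" for n
      using that p by (auto intro: div_nat_eqI simp: mult.commute)
    then show "(\<Sum>n\<in>{m * p..<m * p + p}. (1/2::real) ^ (n div p)) = real p * (1/2) ^ m"
      by simp
  qed
  also have "\<dots> = real p * (\<Sum>m<N. (1/2) ^ m)" by (simp add: sum_distrib_left)
  also have "\<dots> \<le> real p * 2"
    using geometric_sum_less[of "1/2::real" "{..<N}"] by (intro mult_left_mono) auto
  finally show ?thesis by simp
qed

lemma neumann_expansion:
  assumes inv: "meq K (mprod K b X) mone" and M: "M \<noteq> 0"
  defines "A \<equiv> \<lambda>i j. mone i j - b i j / M"
  shows "i < K \<Longrightarrow> j < K \<Longrightarrow> X i j = (\<Sum>n<N. mpow K A n i j) / M + mprod K (mpow K A N) X i j"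
proof (induction N arbitrary: i)
  case 0
  then show ?case using mprod_mone_left[of K X] unfolding meq_def by simp
next
  case (Suc N)
  have AX: "X k j = mone k j / M + mprod K A X k j" if "k < K" for k
  proof -
    have "mprod K A X k j = (\<Sum>l<K. mone k l * X l j) - (\<Sum>l<K. b k l * X l j) / M"
      unfolding A_def mprod_def by (simp add: algebra_simps sum_subtractf sum_divide_distrib)
    also have "\<dots> = X k j - mone k j / M"
      using inv that Suc.prems by (simp add: sum_mone_left meq_def mprod_def)
    finally show ?thesis by simp
  qed
  let ?P = "mpow K A N"
  have "mprod K ?P X i j = (\<Sum>k<K. ?P i k * (mone k j / M + mprod K A X k j))"
    unfolding mprod_def[of K ?P X] using AX by (intro sum.cong) auto
  also have "\<dots> = (\<Sum>k<K. ?P i k * mone k j) / M + mprod K ?P (mprod K A X) i j"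
    by (simp add: mprod_def[of K ?P] algebra_simps sum.distrib sum_divide_distrib)
  also have "(\<Sum>k<K. ?P i k * mone k j) = ?P i j"
    using Suc.prems by (simp add: sum_mone_right)
  also have "mprod K ?P (mprod K A X) i j = mprod K (mpow K A (Suc N)) X i j"
    using mprod_cong[OF meq_sym[OF mpow_Suc_right[of K A N]] meq_refl[of K X]] Suc.prems
    unfolding mprod_assoc[symmetric] meq_def by auto
  finally show ?case using Suc.IH[OF Suc.prems] by (simp add: add_divide_distrib)
qed

lemma inverse_entry_le_neumann:
  assumes inv: "meq K (mprod K b X) mone" and M: "M > 0"
    and m: "m > 0" "\<And>x. m * sqnorm K x \<le> qform K b x"
    and A: "op_norm_le K (\<lambda>i j. mone i j - b i j / M) r" "r \<ge> 0" and ij: "i < K" "j < K"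
  shows "\<bar>X i j\<bar> \<le> (\<Sum>n<N. \<bar>mpow K (\<lambda>i j. mone i j - b i j / M) n i j\<bar>) / M + r ^ N / m"
proof -
  let ?A = "\<lambda>i j. mone i j - b i j / M"
  have "op_norm_le K (mprod K (mpow K ?A N) X) (r ^ N * (1 / m))"
    by (intro op_norm_le_mprod op_norm_le_mpow op_norm_le_inverse[OF m inv] A(1))
  then have rem: "\<bar>mprod K (mpow K ?A N) X i j\<bar> \<le> r ^ N / m"
    using abs_entry_le_op_norm[OF _ _ ij] A(2) m(1) by simp
  have "X i j = (\<Sum>n<N. mpow K ?A n i j) / M + mprod K (mpow K ?A N) X i j"
    by (rule neumann_expansion[OF inv _ ij]) (use M in simp)
  then have "\<bar>X i j\<bar> \<le> \<bar>(\<Sum>n<N. mpow K ?A n i j) / M\<bar> + \<bar>mprod K (mpow K ?A N) X i j\<bar>"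
    by (subst \<open>X i j = _\<close>) (rule abs_triangle_ineq)
  also have "\<bar>(\<Sum>n<N. mpow K ?A n i j) / M\<bar> \<le> (\<Sum>n<N. \<bar>mpow K ?A n i j\<bar>) / M"
    using M by (simp add: divide_right_mono sum_abs)
  finally show ?thesis using rem by linarith
qed

lemma shifted_op_norm_le:
  assumes S: "msym K b" and Q: "\<And>x. m * sqnorm K x \<le> qform K b x \<and> qform K b x \<le> M * sqnorm K x"
    and M: "M > 0" and r: "1 - m / M \<le> r"
  shows "op_norm_le K (\<lambda>i j. mone i j - b i j / M) r"
proof (rule op_norm_le_of_qform)
  show "msym K (\<lambda>i j. mone i j - b i j / M)" using S unfolding msym_def mone_def by auto
  fix x
  have "mapply K (\<lambda>i j. mone i j - b i j / M) x k = x k - mapply K b x k / M" if "k < K" for k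
    using that unfolding mapply_def
    by (simp add: left_diff_distrib sum_subtractf sum_divide_distrib sum_mone_left)
  then have "qform K (\<lambda>i j. mone i j - b i j / M) x = (\<Sum>k<K. x k * (x k - mapply K b x k / M))"
    unfolding qform_def bform_def by (intro sum.cong) auto
  also have "\<dots> = sqnorm K x - qform K b x / M"
    unfolding qform_def bform_def sqnorm_def
    by (simp add: right_diff_distrib sum_subtractf sum_divide_distrib power2_eq_square)
  finally have "qform K (\<lambda>i j. mone i j - b i j / M) x = sqnorm K x - qform K b x / M" .
  moreover have "m / M * sqnorm K x \<le> qform K b x / M" "qform K b x / M \<le> sqnorm K x"
    using Q[of x] M by (simp_all add: divide_right_mono divide_le_eq mult.commute)
  moreover have "(1 - m / M) * sqnorm K x \<le> r * sqnorm K x"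
    using r sqnorm_nonneg[of K x] by (intro mult_right_mono)
  ultimately show "0 \<le> qform K (\<lambda>i j. mone i j - b i j / M) x
      \<and> qform K (\<lambda>i j. mone i j - b i j / M) x \<le> r * sqnorm K x"
    by (simp add: algebra_simps)
qed

lemma shifted_wnorm_le:
  assumes K: "0 < K" and M: "M > 0" and decay: "\<And>i j. i < K \<Longrightarrow> j < K \<Longrightarrow> \<bar>b i j\<bar> * poly_weight g i j \<le> \<kappa>"
  shows "wnorm g K (\<lambda>i j. mone i j - b i j / M) \<le> 1 + \<kappa> / M"
proof (rule wnorm_le[OF K])
  fix i j assume ij: "i < K" "j < K"
  have "\<bar>mone i j - b i j / M\<bar> \<le> \<bar>mone i j\<bar> + \<bar>b i j\<bar> / M"
    using abs_triangle_ineq4[of "mone i j" "b i j / M"] M by simp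
  then have "\<bar>mone i j - b i j / M\<bar> * poly_weight g i j \<le> (\<bar>mone i j\<bar> + \<bar>b i j\<bar> / M) * poly_weight g i j"
    by (rule mult_right_mono) (simp add: poly_weight_def)
  also have "\<dots> = \<bar>mone i j\<bar> * poly_weight g i j + \<bar>b i j\<bar> * poly_weight g i j / M"
    by (simp add: algebra_simps)
  also have "\<dots> \<le> 1 + \<kappa> / M"
    using decay[OF ij] M by (intro add_mono divide_right_mono) (auto simp: mone_def)
  finally show "\<bar>mone i j - b i j / M\<bar> * poly_weight g i j \<le> 1 + \<kappa> / M" .
qed

lemma le_of_le_plus_geometric:
  fixes x a c r :: real
  assumes le: "\<And>N. x \<le> a + c * r ^ N" and r: "0 \<le> r" "r < 1"
  shows "x \<le> a"
proof -
  have "(\<lambda>N. c * r ^ N) \<longlonglongrightarrow> 0"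
    using r by (intro tendsto_mult_right_zero LIMSEQ_power_zero) simp
  then have "(\<lambda>N. a + c * r ^ N) \<longlonglongrightarrow> a"
    using tendsto_add[OF tendsto_const, of _ 0 sequentially a] by simp
  then show ?thesis using le by (intro LIMSEQ_le_const) auto
qed

theorem jaffard_inverse_decay:
  assumes g: "g > 1" and m: "0 < m" "m \<le> M" and \<kappa>: "\<kappa> \<ge> 0"
  shows "\<exists>C. \<forall>K b X i j. 0 < K \<longrightarrow> msym K b \<longrightarrow>
    (\<forall>x. m * sqnorm K x \<le> qform K b x \<and> qform K b x \<le> M * sqnorm K x) \<longrightarrow>
    (\<forall>i<K. \<forall>j<K. \<bar>b i j\<bar> * poly_weight g i j \<le> \<kappa>) \<longrightarrow>
    meq K (mprod K b X) mone \<longrightarrow> i < K \<longrightarrow> j < K \<longrightarrow> \<bar>X i j\<bar> * poly_weight g i j \<le> C"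
proof -
  have M: "M > 0" using m by simp
  \<comment> \<open>the floor \<open>1/2\<close> keeps \<open>r\<close> positive when \<open>m = M\<close>\<close>
  define r where "r = max (1 - m / M) (1/2)"
  define G where "G = 1 + \<kappa> / M"
  let ?c = "wmult_const g"
  have r: "0 < r" "r < 1" "1 - m / M \<le> r" unfolding r_def using m M by auto
  have G: "G \<ge> 1" unfolding G_def using \<kappa> M by simp
  obtain p where p: "p > 0" and small: "\<And>K A. 0 < K \<Longrightarrow> msym K A \<Longrightarrow> op_norm_le K A r
      \<Longrightarrow> wnorm g K A \<le> G \<Longrightarrow> wnorm g K (mpow K A p) \<le> 1 / (2 * ?c)"
    using exists_wnorm_mpow_le[OF g r(1,2), of "1 / (2 * ?c)" G] wmult_const_ge_one[OF g] by auto
  define \<beta> where "\<beta> = (?c * G) ^ p"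
  show ?thesis
  proof (intro exI[of _ "\<beta> * (2 * real p) / M"] allI impI)
    fix K b X i j
    assume K: "0 < K" and S: "msym K b"
      and Q: "\<forall>x. m * sqnorm K x \<le> qform K b x \<and> qform K b x \<le> M * sqnorm K x"
      and decay: "\<forall>i<K. \<forall>j<K. \<bar>b i j\<bar> * poly_weight g i j \<le> \<kappa>"
      and inv: "meq K (mprod K b X) mone" and ij: "i < K" "j < K"
    let ?A = "\<lambda>i j. mone i j - b i j / M" and ?w = "poly_weight g i j"
    have w: "?w \<ge> 1" using poly_weight_ge_one g by simp
    have opA: "op_norm_le K ?A r" using shifted_op_norm_le[OF S _ M r(3)] Q by blast
    have wA: "wnorm g K ?A \<le> G" unfolding G_def using shifted_wnorm_le[OF K M] decay by blast
    have SA: "msym K ?A" using S unfolding msym_def mone_def by auto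
    have geo: "wnorm g K (mpow K ?A n) \<le> \<beta> * (1/2) ^ (n div p)" for n
      using wnorm_mpow_geometric[OF g K wA G p small[OF K SA opA wA]] unfolding \<beta>_def .
    have "\<bar>X i j\<bar> * ?w \<le> \<beta> * (2 * real p) / M + ?w / m * r ^ N" for N
    proof -
      have "\<bar>X i j\<bar> * ?w \<le> ((\<Sum>n<N. \<bar>mpow K ?A n i j\<bar>) / M + r ^ N / m) * ?w"
        using inverse_entry_le_neumann[OF inv M m(1) _ opA _ ij] Q r w by (intro mult_right_mono) auto
      also have "\<dots> = (\<Sum>n<N. \<bar>mpow K ?A n i j\<bar> * ?w) / M + ?w / m * r ^ N"
        by (simp add: sum_distrib_left sum_distrib_right algebra_simps)
      also have "(\<Sum>n<N. \<bar>mpow K ?A n i j\<bar> * ?w) \<le> (\<Sum>n<N. \<beta> * (1/2) ^ (n div p))"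
        using wnorm_ge[OF ij] geo by (intro sum_mono) (meson order_trans)
      also have "\<dots> \<le> \<beta> * (2 * real p)"
        unfolding sum_distrib_left[symmetric] using sum_half_pow_div_le[OF p] G wmult_const_ge_one[OF g]
        by (intro mult_left_mono) (auto simp: \<beta>_def)
      finally show ?thesis using M by (simp add: divide_right_mono)
    qed
    then show "\<bar>X i j\<bar> * ?w \<le> \<beta> * (2 * real p) / M"
      by (rule le_of_le_plus_geometric) (use r in auto)
  qed
qed

section \<open>The rescaled matrix \<open>a(t)\<close>\<close>

definition exp_decay_integral :: "real \<Rightarrow> real \<Rightarrow> real" where
  "exp_decay_integral t s = (1 - exp (- s * t)) / s"

lemma exp_decay_integral_has_integral:
  assumes "s \<noteq> 0" "t \<ge> 0"
  shows "((\<lambda>\<tau>. exp (- s * \<tau>)) has_integral exp_decay_integral t s) {0..t}"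
proof -
  have "((\<lambda>\<tau>. - exp (- s * \<tau>) / s) has_vector_derivative exp (- s * \<tau>)) (at \<tau> within {0..t})" for \<tau>
    unfolding has_real_derivative_iff_has_vector_derivative[symmetric]
    using assms by (auto intro!: derivative_eq_intros)
  from fundamental_theorem_of_calculus[OF assms(2) this]
  show ?thesis unfolding exp_decay_integral_def by (simp add: diff_divide_distrib)
qed

lemma exp_decay_integral_bounds:
  assumes s: "s > 0" and t: "t > 0"
  shows "0 < exp_decay_integral t s" "exp_decay_integral t s \<le> t" "exp_decay_integral t s \<le> 1 / s"
proof -
  show "0 < exp_decay_integral t s" unfolding exp_decay_integral_def using s t by simp
  have "1 - exp (- s * t) \<le> s * t" using exp_ge_add_one_self[of "- s * t"] by simp
  then show "exp_decay_integral t s \<le> t"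
    unfolding exp_decay_integral_def using s by (simp add: divide_le_eq mult.commute)
  show "exp_decay_integral t s \<le> 1 / s"
    unfolding exp_decay_integral_def using s by (intro divide_right_mono) auto
qed

text \<open>A coercivity bound for \<open>a\<close> survives the entrywise multiplication by
  \<open>exp_decay_integral t (\<lambda>\<^sub>i + \<lambda>\<^sub>j)\<close>, because the product is the integral over \<open>\<tau> \<in> [0, t]\<close> of
  the congruence of \<open>a\<close> by \<open>diag (exp (- \<lambda>\<^sub>i \<tau>))\<close>.\<close>

lemma qform_exp_decay_integral_ge:
  assumes t: "t \<ge> 0" and lam: "\<And>i. i < K \<Longrightarrow> lam i > 0"
    and coercive: "\<And>z. c * sqnorm K z \<le> qform K a z"
  shows "c * (\<Sum>i<K. (y i)\<^sup>2 * exp_decay_integral t (2 * lam i))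
    \<le> (\<Sum>i<K. \<Sum>j<K. a i j * y i * y j * exp_decay_integral t (lam i + lam j))"
proof -
  define z where "z \<tau> = (\<lambda>i. exp (- lam i * \<tau>) * y i)" for \<tau>
  have exp2: "exp (- (s + s') * \<tau>) = exp (- s * \<tau>) * exp (- s' * \<tau>)" for s s' \<tau> :: real
    by (simp add: exp_add[symmetric] algebra_simps)
  have "((\<lambda>\<tau>. (\<Sum>i<K. \<Sum>j<K. a i j * y i * y j * exp (- (lam i + lam j) * \<tau>))
      - c * (\<Sum>i<K. (y i)\<^sup>2 * exp (- (2 * lam i) * \<tau>)))
    has_integral (\<Sum>i<K. \<Sum>j<K. a i j * y i * y j * exp_decay_integral t (lam i + lam j))
      - c * (\<Sum>i<K. (y i)\<^sup>2 * exp_decay_integral t (2 * lam i))) {0..t}" (is "(_ has_integral ?I) _")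
    using lam t add_pos_pos[OF lam lam]
    by (intro has_integral_diff has_integral_mult_right has_integral_sum finite_lessThan
        exp_decay_integral_has_integral) (auto dest: less_imp_neq[symmetric])
  moreover have "0 \<le> (\<Sum>i<K. \<Sum>j<K. a i j * y i * y j * exp (- (lam i + lam j) * \<tau>))
      - c * (\<Sum>i<K. (y i)\<^sup>2 * exp (- (2 * lam i) * \<tau>))" for \<tau>
  proof -
    have "qform K a (z \<tau>) = (\<Sum>i<K. \<Sum>j<K. a i j * y i * y j * exp (- (lam i + lam j) * \<tau>))"
      unfolding qform_expand z_def exp2 by (simp add: algebra_simps)
    moreover have "sqnorm K (z \<tau>) = (\<Sum>i<K. (y i)\<^sup>2 * exp (- (2 * lam i) * \<tau>))"
      unfolding sqnorm_def z_def mult_2 exp2 by (simp add: power2_eq_square algebra_simps)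
    ultimately show ?thesis using coercive[of "z \<tau>"] by simp
  qed
  ultimately have "0 \<le> ?I" by (rule has_integral_nonneg)
  then show ?thesis by simp
qed

definition time_scale :: "(nat \<Rightarrow> real) \<Rightarrow> real \<Rightarrow> nat \<Rightarrow> real" where
  "time_scale lam t i = sqrt ((1 + lam i * t) / t)"

lemma time_scale_pos: "lam i > 0 \<Longrightarrow> t > 0 \<Longrightarrow> time_scale lam t i > 0"
  unfolding time_scale_def by (simp add: add_pos_pos)

lemma time_scale_squared: "lam i > 0 \<Longrightarrow> t > 0 \<Longrightarrow> (time_scale lam t i)\<^sup>2 = (1 + lam i * t) / t"
  unfolding time_scale_def by (simp add: add_pos_pos less_imp_le)

lemma Lfun_eq_time_scale: "Lfun lam i j t = time_scale lam t i * time_scale lam t j"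
  unfolding Lfun_def time_scale_def ..

lemma diag_exp_decay_integral_bounds:
  assumes l: "l > 0" and t: "t > 0"
  shows "1/2 \<le> (1 + l * t) / t * exp_decay_integral t (2 * l)"
    and "(1 + l * t) / t * exp_decay_integral t (2 * l) \<le> 2"
proof -
  define u where "u = l * t"
  have u: "u > 0" unfolding u_def using l t by simp
  have "1 + u \<le> exp (2 * u)" using exp_ge_add_one_self[of "2 * u"] u by linarith
  then have "exp (- (2 * u)) \<le> 1 / (1 + u)" using u by (simp add: exp_minus field_simps)
  then have "u \<le> (1 + u) * (1 - exp (- (2 * u)))" using u by (simp add: field_simps)
  then have "u / (2 * u) \<le> (1 + u) * (1 - exp (- (2 * u))) / (2 * u)"
    using u by (intro divide_right_mono) auto
  also have "\<dots> = (1 + l * t) / t * exp_decay_integral t (2 * l)"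
    unfolding exp_decay_integral_def u_def using t l by (simp add: field_simps)
  finally show "1/2 \<le> (1 + l * t) / t * exp_decay_integral t (2 * l)" using u by simp
  have "2 * l > 0" using l by simp
  note G = exp_decay_integral_bounds[OF this t]
  have "(1 + l * t) / t * exp_decay_integral t (2 * l)
      = exp_decay_integral t (2 * l) / t + l * exp_decay_integral t (2 * l)"
    using t by (simp add: field_simps)
  also have "\<dots> \<le> 1 + l * (1 / (2 * l))"
    using G t l by (intro add_mono mult_left_mono) (auto simp: divide_le_eq)
  also have "\<dots> = 3 / 2" using l by simp
  finally show "(1 + l * t) / t * exp_decay_integral t (2 * l) \<le> 2" by linarith
qed

lemma time_scale_exp_decay_integral_le:
  assumes li: "lam i > 0" and lj: "lam j > 0" and t: "t > 0"
  shows "time_scale lam t i * time_scale lam t j * exp_decay_integral t (lam i + lam j) \<le> 2"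
proof -
  let ?a = "time_scale lam t i" and ?b = "time_scale lam t j" and ?G = "exp_decay_integral t (lam i + lam j)"
  have s: "lam i + lam j > 0" using li lj by simp
  note G = exp_decay_integral_bounds[OF s t]
  have "?a * ?b \<le> (?a\<^sup>2 + ?b\<^sup>2) / 2" using sum_squares_bound[of ?a ?b] by simp
  then have "?a * ?b * ?G \<le> ((?a\<^sup>2 + ?b\<^sup>2) / 2) * ?G"
    using G(1) by (intro mult_right_mono) auto
  also have "\<dots> = ?G / t + (lam i + lam j) * ?G / 2"
    using t li lj by (simp add: time_scale_squared field_simps)
  also have "\<dots> \<le> 1 + 1 / 2"
    using G s t by (intro add_mono) (auto simp: divide_le_eq le_divide_eq mult.commute)
  finally show ?thesis by simp
qed

definition scaled_at :: "(nat \<Rightarrow> real) \<Rightarrow> real \<Rightarrow> rmat \<Rightarrow> rmat" where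
  "scaled_at lam t a = (\<lambda>i j. time_scale lam t i * time_scale lam t j * a i j
    * exp_decay_integral t (lam i + lam j))"

lemma msym_scaled_at: "msym K a \<Longrightarrow> msym K (scaled_at lam t a)"
  unfolding msym_def scaled_at_def by (simp add: add.commute mult.commute mult.left_commute)

lemma qform_scaled_at:
  "qform K (scaled_at lam t a) x = (\<Sum>i<K. \<Sum>j<K. a i j * (time_scale lam t i * x i)
    * (time_scale lam t j * x j) * exp_decay_integral t (lam i + lam j))"
  unfolding qform_expand scaled_at_def by (simp add: algebra_simps)

lemma qform_scaled_at_bounds:
  assumes lam: "\<And>i. i < K \<Longrightarrow> lam i > 0" and t: "t > 0" and \<Lambda>: "0 < \<Lambda>0" "\<Lambda>0 \<le> \<Lambda>1"
    and coercive: "\<And>z. \<Lambda>0 * sqnorm K z \<le> qform K a z \<and> qform K a z \<le> \<Lambda>1 * sqnorm K z"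
  shows "\<Lambda>0 / 2 * sqnorm K x \<le> qform K (scaled_at lam t a) x
    \<and> qform K (scaled_at lam t a) x \<le> 2 * \<Lambda>1 * sqnorm K x"
proof -
  let ?y = "\<lambda>i. time_scale lam t i * x i"
  let ?D = "\<Sum>i<K. (?y i)\<^sup>2 * exp_decay_integral t (2 * lam i)"
  have D: "?D = (\<Sum>i<K. (x i)\<^sup>2 * ((1 + lam i * t) / t * exp_decay_integral t (2 * lam i)))"
    using lam t by (intro sum.cong) (auto simp: power_mult_distrib time_scale_squared)
  have "(x i)\<^sup>2 * (1/2) \<le> (x i)\<^sup>2 * ((1 + lam i * t) / t * exp_decay_integral t (2 * lam i))"
    "(x i)\<^sup>2 * ((1 + lam i * t) / t * exp_decay_integral t (2 * lam i)) \<le> (x i)\<^sup>2 * 2"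
    if "i < K" for i
    by (rule mult_left_mono[OF diag_exp_decay_integral_bounds(1)[OF lam[OF that] t] zero_le_power2]
        mult_left_mono[OF diag_exp_decay_integral_bounds(2)[OF lam[OF that] t] zero_le_power2])+
  then have "sqnorm K x / 2 \<le> ?D" "?D \<le> 2 * sqnorm K x"
    unfolding D sqnorm_def sum_divide_distrib sum_distrib_left
    by (auto intro!: sum_mono simp: mult.commute)
  then have "\<Lambda>0 / 2 * sqnorm K x \<le> \<Lambda>0 * ?D" "\<Lambda>1 * ?D \<le> 2 * \<Lambda>1 * sqnorm K x"
    using \<Lambda> by (simp_all add: mult_left_mono)
  moreover have "\<Lambda>0 * ?D \<le> qform K (scaled_at lam t a) x"
    unfolding qform_scaled_at using qform_exp_decay_integral_ge[OF _ lam] t coercive by auto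
  moreover have "qform K (scaled_at lam t a) x \<le> \<Lambda>1 * ?D"
    using qform_exp_decay_integral_ge[OF _ lam, where t = t and c = "- \<Lambda>1"
        and a = "\<lambda>i j. - a i j" and y = ?y] t coercive
    unfolding qform_scaled_at qform_uminus by (simp add: sum_negf)
  ultimately show ?thesis by linarith
qed

lemma scaled_at_weighted_le:
  assumes lam: "lam i > 0" "lam j > 0" and t: "t > 0" and g: "g \<ge> 0"
    and a: "\<bar>a i j\<bar> \<le> \<kappa> / (1 + \<bar>real i - real j\<bar> powr g)"
  shows "\<bar>scaled_at lam t a i j\<bar> * poly_weight g i j \<le> 2 * \<kappa> * 2 powr g"
proof -
  let ?s = "time_scale lam t i * time_scale lam t j * exp_decay_integral t (lam i + lam j)"
  let ?d = "1 + \<bar>real i - real j\<bar> powr g"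
  have d: "?d > 0" by (simp add: add_pos_nonneg)
  have "0 < ?s"
    using time_scale_pos[of lam i t] time_scale_pos[of lam j t]
      exp_decay_integral_bounds(1)[of "lam i + lam j" t] lam t by simp
  then have s: "0 \<le> ?s" "?s \<le> 2"
    using time_scale_exp_decay_integral_le[OF lam t] by simp_all
  have eq: "scaled_at lam t a i j = ?s * a i j" unfolding scaled_at_def by (simp add: mult_ac)
  have "\<bar>scaled_at lam t a i j\<bar> = ?s * \<bar>a i j\<bar>"
    unfolding eq abs_mult[of ?s "a i j"] abs_of_nonneg[OF s(1)] ..
  also have "\<dots> \<le> 2 * (\<kappa> / ?d)" using s a by (intro mult_mono) auto
  finally have "\<bar>scaled_at lam t a i j\<bar> * poly_weight g i j \<le> 2 * (\<kappa> / ?d) * (2 powr g * ?d)"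
    using poly_weight_le_powr_dist[OF g, of i j] poly_weight_pos[OF g, of i j]
    by (intro mult_mono) auto
  also have "\<dots> = 2 * \<kappa> * 2 powr g" using d by simp
  finally show ?thesis .
qed

lemma scalar_prod_vec_self: "Matrix.vec K z \<bullet> Matrix.vec K z = sqnorm K z"
  unfolding scalar_prod_def sqnorm_def by (simp add: atLeast0LessThan power2_eq_square)

lemma scalar_prod_mult_mat_vec:
  assumes a: "a \<in> carrier_mat K K"
  shows "Matrix.vec K z \<bullet> (a *\<^sub>v Matrix.vec K z) = qform K (\<lambda>i j. a $$ (i, j)) z"
proof -
  have "Matrix.row a i \<bullet> Matrix.vec K z = mapply K (\<lambda>i j. a $$ (i, j)) z i" if "i < K" for i
    unfolding scalar_prod_def mapply_def using a that by (simp add: atLeast0LessThan)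
  then show ?thesis
    unfolding scalar_prod_def[of "Matrix.vec K z"] qform_def bform_def using a by (simp add: atLeast0LessThan)
qed

lemma qform_bounds_of_carrier_bounds:
  assumes "a \<in> carrier_mat K K"
    and "\<forall>x \<in> carrier_vec K. \<Lambda>0 * (x \<bullet> x) \<le> x \<bullet> (a *\<^sub>v x) \<and> x \<bullet> (a *\<^sub>v x) \<le> \<Lambda>1 * (x \<bullet> x)"
  shows "\<Lambda>0 * sqnorm K z \<le> qform K (\<lambda>i j. a $$ (i, j)) z
    \<and> qform K (\<lambda>i j. a $$ (i, j)) z \<le> \<Lambda>1 * sqnorm K z"
  using assms(2) vec_carrier[of K z]
  unfolding scalar_prod_vec_self[symmetric] scalar_prod_mult_mat_vec[OF assms(1), symmetric] by blast

lemma msym_of_transpose: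
  assumes "a \<in> carrier_mat K K" "transpose_mat a = a"
  shows "msym K (\<lambda>i j. a $$ (i, j))"
  unfolding msym_def
proof (intro allI impI)
  fix i j assume "i < K" "j < K"
  then have "transpose_mat a $$ (i, j) = a $$ (j, i)" using assms(1) by simp
  then show "a $$ (i, j) = a $$ (j, i)" using assms(2) by simp
qed

lemma at_mat_eq_scaled_at:
  assumes "i < K" "j < K" "lam i > 0" "lam j > 0" "t > 0"
  shows "at_mat K lam a t $$ (i, j)
    = scaled_at lam t (\<lambda>i j. a $$ (i, j)) i j / (time_scale lam t i * time_scale lam t j)"
  using assms time_scale_pos[of lam i t] time_scale_pos[of lam j t]
  unfolding at_mat_def scaled_at_def exp_decay_integral_def by simp

lemma at_mat_invertible:
  assumes lam: "\<And>i. i < K \<Longrightarrow> lam i > 0" and t: "t > 0" and m: "m > 0"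
    and coercive: "\<And>x. m * sqnorm K x \<le> qform K (scaled_at lam t (\<lambda>i j. a $$ (i, j))) x"
  obtains B where "mat_inverse (at_mat K lam a t) = Some B"
proof (cases "mat_inverse (at_mat K lam a t)")
  case None
  let ?at = "at_mat K lam a t" and ?s = "time_scale lam t"
  have s: "?s k \<noteq> 0" if "k < K" for k using time_scale_pos[of lam k t, OF lam[OF that] t] by simp
  have at: "?at \<in> carrier_mat K K" unfolding at_mat_def by simp
  have "det ?at = 0"
    using det_non_zero_imp_unit[OF at, where b = "()"] mat_inverse(1)[OF at None, where b = "()"]
    by blast
  then obtain v where v: "v \<in> carrier_vec K" "v \<noteq> 0\<^sub>v K" "?at *\<^sub>v v = 0\<^sub>v K"
    using det_0_iff_vec_prod_zero[OF at] by blast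
  define y where "y i = v $ i / ?s i" for i
  have "qform K (\<lambda>i j. ?at $$ (i, j)) (\<lambda>i. v $ i) = qform K (scaled_at lam t (\<lambda>i j. a $$ (i, j))) y"
    unfolding qform_expand y_def using lam t s
    by (intro sum.cong refl) (simp add: at_mat_eq_scaled_at field_simps)
  moreover have "qform K (\<lambda>i j. ?at $$ (i, j)) (\<lambda>i. v $ i) = 0"
  proof -
    have "Matrix.vec K (\<lambda>i. v $ i) = v" using v(1) by (intro eq_vecI) auto
    then show ?thesis using scalar_prod_mult_mat_vec[OF at, of "\<lambda>i. v $ i"] v by simp
  qed
  ultimately have "sqnorm K y \<le> 0" using coercive[of y] m by (simp add: mult_le_0_iff)
  then have "y i = 0" if "i < K" for i
    using that sum_nonneg_eq_0_iff[of "{..<K}" "\<lambda>i. (y i)\<^sup>2"] sqnorm_nonneg[of K y]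
    unfolding sqnorm_def by auto
  then have "v = 0\<^sub>v K"
    using v(1) s unfolding y_def by (intro eq_vecI) auto
  with v(2) show ?thesis by contradiction
qed

lemma At_mat_scaled_inverse:
  assumes lam: "\<And>i. i < K \<Longrightarrow> lam i > 0" and t: "t > 0" and m: "m > 0"
    and coercive: "\<And>x. m * sqnorm K x \<le> qform K (scaled_at lam t (\<lambda>i j. a $$ (i, j))) x"
  shows "meq K (mprod K (scaled_at lam t (\<lambda>i j. a $$ (i, j)))
    (\<lambda>i j. At_mat K lam a t $$ (i, j) / (time_scale lam t i * time_scale lam t j))) mone"
  unfolding meq_def
proof (intro allI impI)
  fix i j assume ij: "i < K" "j < K"
  let ?at = "at_mat K lam a t" and ?s = "time_scale lam t"
  have s: "?s k \<noteq> 0" if "k < K" for k using time_scale_pos[of lam k t, OF lam[OF that] t] by simp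
  obtain B where B: "mat_inverse ?at = Some B" using at_mat_invertible[OF lam t m coercive] .
  have at: "?at \<in> carrier_mat K K" unfolding at_mat_def by simp
  have AB: "?at * B = 1\<^sub>m K" "B \<in> carrier_mat K K" using mat_inverse(2)[OF at B] by auto
  have "mprod K (scaled_at lam t (\<lambda>i j. a $$ (i, j))) (\<lambda>i j. At_mat K lam a t $$ (i, j) / (?s i * ?s j)) i j
      = ?s i / ?s j * (\<Sum>k<K. ?at $$ (i, k) * B $$ (k, j))"
    unfolding mprod_def At_mat_def B sum_distrib_left using ij lam t s
    by (intro sum.cong refl) (simp add: at_mat_eq_scaled_at field_simps)
  also have "(\<Sum>k<K. ?at $$ (i, k) * B $$ (k, j)) = (?at * B) $$ (i, j)"
    using at AB(2) ij by (simp add: scalar_prod_def atLeast0LessThan)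
  finally show "mprod K (scaled_at lam t (\<lambda>i j. a $$ (i, j))) (\<lambda>i j. At_mat K lam a t $$ (i, j) / (?s i * ?s j)) i j
      = mone i j"
    using ij s unfolding AB(1) by (simp add: mone_def)
qed

lemma At_mat_entry_bounds:
  fixes a :: "real mat"
  assumes jaffard: "\<forall>K b X i j. 0 < K \<longrightarrow> msym K b \<longrightarrow>
      (\<forall>x. \<Lambda>0 / 2 * sqnorm K x \<le> qform K b x \<and> qform K b x \<le> 2 * \<Lambda>1 * sqnorm K x) \<longrightarrow>
      (\<forall>i<K. \<forall>j<K. \<bar>b i j\<bar> * poly_weight \<gamma> i j \<le> 2 * \<kappa> * 2 powr \<gamma>) \<longrightarrow>
      meq K (mprod K b X) mone \<longrightarrow> i < K \<longrightarrow> j < K \<longrightarrow> \<bar>X i j\<bar> * poly_weight \<gamma> i j \<le> C"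
    and \<gamma>: "\<gamma> \<ge> 0" and \<Lambda>: "0 < \<Lambda>0" "\<Lambda>0 \<le> \<Lambda>1"
    and K: "K \<ge> 1" and lam: "\<forall>i<K. 0 < lam i"
    and a: "a \<in> carrier_mat K K" "transpose_mat a = a"
    and bounds: "\<forall>x \<in> carrier_vec K. \<Lambda>0 * (x \<bullet> x) \<le> x \<bullet> (a *\<^sub>v x) \<and> x \<bullet> (a *\<^sub>v x) \<le> \<Lambda>1 * (x \<bullet> x)"
    and decay: "\<forall>i<K. \<forall>j<K. \<bar>a $$ (i, j)\<bar> \<le> \<kappa> / (1 + \<bar>real i - real j\<bar> powr \<gamma>)"
    and t: "0 < t" and ij: "i < K" "j < K"
  shows "1 / (2 * \<Lambda>1) * Lfun lam i i t * (if i = j then 1 else 0) \<le> \<bar>At_mat K lam a t $$ (i, j)\<bar>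
    \<and> \<bar>At_mat K lam a t $$ (i, j)\<bar> \<le> Lfun lam i j t * (2 * C / (1 + \<bar>real i - real j\<bar> powr \<gamma>))"
proof -
  define b where "b = scaled_at lam t (\<lambda>i j. a $$ (i, j))"
  define X where "X i j = At_mat K lam a t $$ (i, j) / (time_scale lam t i * time_scale lam t j)" for i j
  have S: "msym K b" unfolding b_def by (rule msym_scaled_at[OF msym_of_transpose[OF a]])
  have Q: "\<Lambda>0 / 2 * sqnorm K x \<le> qform K b x \<and> qform K b x \<le> 2 * \<Lambda>1 * sqnorm K x" for x
    unfolding b_def using qform_scaled_at_bounds qform_bounds_of_carrier_bounds[OF a(1) bounds] lam t \<Lambda>
    by blast
  have D: "\<bar>b k l\<bar> * poly_weight \<gamma> k l \<le> 2 * \<kappa> * 2 powr \<gamma>" if "k < K" "l < K" for k l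
    unfolding b_def using scaled_at_weighted_le[OF _ _ t \<gamma>] lam decay that by simp
  have inv: "meq K (mprod K b X) mone"
    unfolding X_def b_def using At_mat_scaled_inverse[of K lam t "\<Lambda>0 / 2"] lam t Q \<Lambda>(1)
    unfolding b_def by auto
  have "\<bar>X i j\<bar> * poly_weight \<gamma> i j \<le> C"
    using jaffard[rule_format, OF _ S Q D inv ij] K by simp
  then have up: "\<bar>X i j\<bar> \<le> 2 * C / (1 + \<bar>real i - real j\<bar> powr \<gamma>)"
    using abs_le_of_weighted_le \<gamma> by simp
  have diag: "1 / (2 * \<Lambda>1) * (if i = j then 1 else 0) \<le> \<bar>X i j\<bar>"
    using inverse_diag_ge[OF S _ Q inv ij(1)] \<Lambda> by auto
  have "time_scale lam t i > 0" "time_scale lam t j > 0"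
    using time_scale_pos[of lam i t] time_scale_pos[of lam j t] lam t ij by auto
  then have At: "\<bar>At_mat K lam a t $$ (i, j)\<bar> = Lfun lam i j t * \<bar>X i j\<bar>" and L: "Lfun lam i j t > 0"
    unfolding X_def Lfun_eq_time_scale by (simp_all add: abs_mult)
  have "Lfun lam i j t * (1 / (2 * \<Lambda>1) * (if i = j then 1 else 0)) \<le> \<bar>At_mat K lam a t $$ (i, j)\<bar>"
    unfolding At using mult_left_mono[OF diag] L by simp
  moreover have "\<bar>At_mat K lam a t $$ (i, j)\<bar> \<le> Lfun lam i j t * (2 * C / (1 + \<bar>real i - real j\<bar> powr \<gamma>))"
    unfolding At using mult_left_mono[OF up] L by simp
  ultimately show ?thesis by (cases "i = j") (simp_all add: mult_ac)
qed

theorem proposition4p12: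
  fixes \<gamma> \<kappa> \<Lambda>0 \<Lambda>1 :: real
  assumes "\<gamma> > 1" and "0 < \<Lambda>0" and "\<Lambda>0 \<le> \<Lambda>1" and "\<kappa> > 0"
  shows "\<exists>c1::real. \<forall>(K::nat) (lam::nat \<Rightarrow> real) (a::real mat) (t::real) i j.
    K \<ge> 1 \<longrightarrow>
    (\<forall>i<K. 0 < lam i) \<longrightarrow>
    (\<forall>i j. i \<le> j \<longrightarrow> j < K \<longrightarrow> lam i \<le> lam j) \<longrightarrow>
    a \<in> carrier_mat K K \<longrightarrow>
    transpose_mat a = a \<longrightarrow>
    (\<forall>x \<in> carrier_vec K. x \<noteq> 0\<^sub>v K \<longrightarrow> 0 < x \<bullet> (a *\<^sub>v x)) \<longrightarrow>
    (\<forall>x \<in> carrier_vec K. \<Lambda>0 * (x \<bullet> x) \<le> x \<bullet> (a *\<^sub>v x)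
                          \<and> x \<bullet> (a *\<^sub>v x) \<le> \<Lambda>1 * (x \<bullet> x)) \<longrightarrow>
    (\<forall>i<K. \<forall>j<K. \<bar>a $$ (i,j)\<bar> \<le> \<kappa> / (1 + \<bar>real i - real j\<bar> powr \<gamma>)) \<longrightarrow>
    0 < t \<longrightarrow> i < K \<longrightarrow> j < K \<longrightarrow>
      (1 / (2 * \<Lambda>1)) * Lfun lam i i t * (if i = j then 1 else 0) \<le> \<bar>At_mat K lam a t $$ (i,j)\<bar>
    \<and> \<bar>At_mat K lam a t $$ (i,j)\<bar> \<le> Lfun lam i j t * (c1 / (1 + \<bar>real i - real j\<bar> powr \<gamma>))"
proof -
  obtain C where jaffard: "\<forall>K b X i j. 0 < K \<longrightarrow> msym K b \<longrightarrow>
      (\<forall>x. \<Lambda>0 / 2 * sqnorm K x \<le> qform K b x \<and> qform K b x \<le> 2 * \<Lambda>1 * sqnorm K x) \<longrightarrow>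
      (\<forall>i<K. \<forall>j<K. \<bar>b i j\<bar> * poly_weight \<gamma> i j \<le> 2 * \<kappa> * 2 powr \<gamma>) \<longrightarrow>
      meq K (mprod K b X) mone \<longrightarrow> i < K \<longrightarrow> j < K \<longrightarrow> \<bar>X i j\<bar> * poly_weight \<gamma> i j \<le> C"
    using jaffard_inverse_decay[of \<gamma> "\<Lambda>0 / 2" "2 * \<Lambda>1" "2 * \<kappa> * 2 powr \<gamma>"] assms by auto
  show ?thesis
    using At_mat_entry_bounds[OF jaffard] assms by (intro exI[of _ "2 * C"] allI impI) auto
qed

end
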